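(* Let $p\ge3$, $X\sim N_p(\theta,D)$ with $D=\operatorname{diag}(d_1,\ldots,d_p)$, $d_j>0$, and $\Gamma=\operatorname{diag}(\gamma_1,\ldots,\gamma_p)$, $\gamma_j\ge0$. Let $d_j^*=d_j^2/(d_j+\gamma_j)$ with indices sorted so that $d_1^*\ge\cdots\ge d_p^*$. Let $A^\dagger$ be the unique maximizer of $c^*(D,A)=\sum_jd_ja_j-2\max_jd_ja_j$ over diagonal $A=\operatorname{diag}(a_1,\ldots,a_p)$, $a_j\ge0$, with $\sum_j(d_j+\gamma_j)a_j^2=\sum_jd_j^*$, and let $\delta_{A^\dagger(\Gamma)}(X)=X-\frac{c^*(D,A^\dagger)}{X^\top A^{\dagger\top}A^\dagger X}A^\dagger X$. Let $\Gamma_\alpha=\alpha(D+\Gamma)-D$ and $\alpha_0=\max_{j=1,\ldots,p}\{d_j/(d_j+\gamma_j)\}\ (\le1)$. Then for each $\alpha\ge\alpha_0$, \[ \max\big[R\{\delta_{A^\dagger(\Gamma)},\pi_{\Gamma_\alpha}\},\,R\{\delta_{A^\dagger(\Gamma)},\mathcal H_{\Gamma_\alpha}\}\big]\le R(\delta^{\mathrm{Bayes}}_{\Gamma_\alpha},\pi_{\Gamma_\alpha})+\alpha^{-1}(d_1^*+d_2^*+d_3^*+d_4^* )=R^L(\mathcal H_{\Gamma_\alpha})+\alpha^{-1}(d_1^*+d_2^*+d_3^*+d_4^* ), \] where $R(\delta^{\mathrm{Bayes}}_{\Gamma_\alpha},\pi_{\Gamma_\alpha})=\operatorname{tr}(D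)-\alpha^{-1}\sum_{j=1}^pd_j^*$.
   Context: For a nonnegative definite diagonal $\Lambda=\operatorname{diag}(\lambda_1,\ldots,\lambda_p)$: $\pi_\Lambda$ is the prior $\theta\sim N(0,\Lambda)$; $R(\delta,\pi_\Lambda)=E^{\pi_\Lambda}E_\theta\|\delta(X)-\theta\|^2$ is the Bayes risk; $\delta^{\mathrm{Bayes}}_\Lambda$ is the Bayes rule with components $\{1-d_j/(d_j+\lambda_j)\}X_j$; $\mathcal H_\Lambda=\{\theta:\theta_j^2\le\lambda_j,\ j=1,\ldots,p\}$; $R(\delta,\mathcal H_\Lambda)=\sup_{\theta\in\mathcal H_\Lambda}E_\theta\|\delta(X)-\theta\|^2$; and $R^L(\mathcal H_\Lambda)=\inf_{\delta\ \text{linear}}R(\delta,\mathcal H_\Lambda)$ is the minimax linear risk over $\mathcal H_\Lambda$. For $\alpha\ge\alpha_0$, $\Gamma_\alpha$ is nonnegative definite. When $p=3$, $d_4^*$ is interpreted as $0$. *)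

theory Defs
  imports "HOL-Probability.Probability"
begin

text \<open>Vectors in R^p are represented as functions nat => real, only the
coordinates 0..p-1 being relevant (index j here corresponds to index j+1 in the paper).
Diagonal matrices are represented by their diagonal.\<close>

definition normal_measure :: "real \<Rightarrow> real \<Rightarrow> real measure" where
  "normal_measure \<mu> v =
     (if v = 0 then return lborel \<mu> else density lborel (normal_density \<mu> (sqrt v)))"

definition gauss_vec :: "nat \<Rightarrow> (nat \<Rightarrow> real) \<Rightarrow> (nat \<Rightarrow> real) \<Rightarrow> (nat \<Rightarrow> real) measure" where
  "gauss_vec p \<mu> v = PiM {..<p} (\<lambda>j. normal_measure (\<mu> j) (v j))"

definition risk :: "nat \<Rightarrow> (nat \<Rightarrow> real) \<Rightarrow> ((nat \<Rightarrow> real) \<Rightarrow> (nat \<Rightarrow> real)) \<Rightarrow> (nat \<Rightarrow> real) \<Rightarrow> ennreal" where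
  "risk p d \<delta> \<theta> = (\<integral>\<^sup>+ x. ennreal (\<Sum>j<p. (\<delta> x j - \<theta> j)\<^sup>2) \<partial>gauss_vec p \<theta> d)"

definition bayes_risk :: "nat \<Rightarrow> (nat \<Rightarrow> real) \<Rightarrow> ((nat \<Rightarrow> real) \<Rightarrow> (nat \<Rightarrow> real)) \<Rightarrow> (nat \<Rightarrow> real) \<Rightarrow> ennreal" where
  "bayes_risk p d \<delta> lam = (\<integral>\<^sup>+ \<theta>. risk p d \<delta> \<theta> \<partial>gauss_vec p (\<lambda>_. 0) lam)"

definition hyperrect :: "nat \<Rightarrow> (nat \<Rightarrow> real) \<Rightarrow> (nat \<Rightarrow> real) set" where
  "hyperrect p lam = {\<theta>. \<theta> \<in> extensional {..<p} \<and> (\<forall>j<p. (\<theta> j)\<^sup>2 \<le> lam j)}"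

definition max_risk :: "nat \<Rightarrow> (nat \<Rightarrow> real) \<Rightarrow> ((nat \<Rightarrow> real) \<Rightarrow> (nat \<Rightarrow> real)) \<Rightarrow> (nat \<Rightarrow> real) \<Rightarrow> ennreal" where
  "max_risk p d \<delta> lam = (SUP \<theta>\<in>hyperrect p lam. risk p d \<delta> \<theta>)"

definition lin_est :: "nat \<Rightarrow> (nat \<Rightarrow> nat \<Rightarrow> real) \<Rightarrow> (nat \<Rightarrow> real) \<Rightarrow> (nat \<Rightarrow> real)" where
  "lin_est p C x = (\<lambda>i. \<Sum>j<p. C i j * x j)"

definition minimax_linear_risk :: "nat \<Rightarrow> (nat \<Rightarrow> real) \<Rightarrow> (nat \<Rightarrow> real) \<Rightarrow> ennreal" where
  "minimax_linear_risk p d lam = (INF C. max_risk p d (lin_est p C) lam)"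

definition bayes_rule :: "(nat \<Rightarrow> real) \<Rightarrow> (nat \<Rightarrow> real) \<Rightarrow> (nat \<Rightarrow> real) \<Rightarrow> (nat \<Rightarrow> real)" where
  "bayes_rule d lam x = (\<lambda>j. (1 - d j / (d j + lam j)) * x j)"

definition cstar :: "nat \<Rightarrow> (nat \<Rightarrow> real) \<Rightarrow> (nat \<Rightarrow> real) \<Rightarrow> real" where
  "cstar p d a = (\<Sum>j<p. d j * a j) - 2 * Max ((\<lambda>j. d j * a j) ` {..<p})"

definition shrink_est :: "nat \<Rightarrow> (nat \<Rightarrow> real) \<Rightarrow> (nat \<Rightarrow> real) \<Rightarrow> (nat \<Rightarrow> real) \<Rightarrow> (nat \<Rightarrow> real)" where
  "shrink_est p d a x =
     (\<lambda>j. x j - cstar p d a / (\<Sum>k<p. (a k * x k)\<^sup>2) * (a j * x j))"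

definition dstar :: "(nat \<Rightarrow> real) \<Rightarrow> (nat \<Rightarrow> real) \<Rightarrow> nat \<Rightarrow> real" where
  "dstar d \<gamma> j = (d j)\<^sup>2 / (d j + \<gamma> j)"

definition feasibleA :: "nat \<Rightarrow> (nat \<Rightarrow> real) \<Rightarrow> (nat \<Rightarrow> real) \<Rightarrow> (nat \<Rightarrow> real) \<Rightarrow> bool" where
  "feasibleA p d \<gamma> a \<longleftrightarrow> (\<forall>j<p. a j \<ge> 0) \<and>
     (\<Sum>j<p. (d j + \<gamma> j) * (a j)\<^sup>2) = (\<Sum>j<p. dstar d \<gamma> j)"

end

theory Submission
  imports Defs "HOL-Real_Asymp.Real_Asymp"
begin

text \<open>
  Write Q(x) = \<Sum>j (a_j x_j)^2 and c = c*(D,A). Stein's identity turns the cross term in the risk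
  of the shrinkage estimator into the expected divergence of x \<mapsto> D A x / Q(x), which by the
  very definition of c* is at least c E[1/Q]; so the risk is at most tr D - c^2 E[1/Q]. The tangent
  bound 1/Q \<ge> 2/m - Q/m^2 with m = \<alpha> \<Sum>j d_j* then gives tr D - c^2/m, because the constraint
  on A makes E Q \<le> m on the hyperrectangle and E Q = m on average under the prior. Comparing the
  maximiser with the feasible competitor built from the d_j* truncated at d_5* gives
  c^2 \<ge> (\<Sum>j d_j*)(\<Sum>j\<ge>5 d_j*). Finally the Bayes risk of the Bayes rule and the minimax linear
  risk both equal \<Sum>j d_j \<lambda>_j/(d_j + \<lambda>_j) = tr D - \<alpha>^-1 \<Sum>j d_j*; for the lower bound on linear
  rules the vertex \<theta>_j = \<plusminus>\<surd>\<lambda>_j of the hyperrectangle is chosen one coordinate at a time so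
  that the bias only grows. E[1/Q] is finite because c > 0 forces three nonzero a_j, and
  |t|^(-2/3) is locally integrable.
\<close>

section \<open>Gaussian moments\<close>

lemma normal_density_abs: "normal_density \<mu> \<bar>\<sigma>\<bar> = normal_density \<mu> \<sigma>"
  by (simp add: normal_density_def fun_eq_iff)

lemma normal_measure_nonzero:
  "v \<noteq> 0 \<Longrightarrow> normal_measure \<mu> v = density lborel (normal_density \<mu> (sqrt v))"
  by (simp add: normal_measure_def)

lemma prob_space_normal_measure: "prob_space (normal_measure \<mu> v)"
proof (cases "v = 0")
  case True
  then show ?thesis by (simp add: normal_measure_def prob_space_return)
next
  case False
  then have "0 < \<bar>sqrt v\<bar>" by simp
  from prob_space_normal_density[OF this] show ?thesis
    using False by (simp add: normal_measure_def normal_density_abs)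
qed

lemma sets_normal_measure [measurable_cong]: "sets (normal_measure \<mu> v) = sets borel"
  by (simp add: normal_measure_def)

lemma has_bochner_integral_const_prob:
  assumes "prob_space M"
  shows "has_bochner_integral M (\<lambda>x. c::real) c"
proof -
  interpret prob_space M by fact
  show ?thesis by (simp add: has_bochner_integral_iff prob_space)
qed

lemma has_bochner_integral_return:
  fixes f :: "real \<Rightarrow> real"
  assumes [measurable]: "f \<in> borel_measurable borel"
  shows "has_bochner_integral (return lborel a) f (f a)"
proof -
  have "integrable (return lborel a) f"
    unfolding integrable_iff_bounded by (simp add: nn_integral_return)
  then show ?thesis by (simp add: has_bochner_integral_iff integral_return)
qed

lemma normal_measure_centered_mean:
  "has_bochner_integral (normal_measure \<mu> v) (\<lambda>x. x - \<mu>) 0"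
proof (cases "v = 0")
  case True
  then show ?thesis
    using has_bochner_integral_return[of "\<lambda>x. x - \<mu>" \<mu>] by (simp add: normal_measure_def)
next
  case False
  then have "0 < \<bar>sqrt v\<bar>" by simp
  from normal_moment_odd[OF this, of \<mu> 0]
  have "has_bochner_integral lborel (\<lambda>x. normal_density \<mu> (sqrt v) x * (x - \<mu>)) 0"
    by (simp add: normal_density_abs)
  then show ?thesis
    unfolding normal_measure_nonzero[OF False] by (intro has_bochner_integral_density) auto
qed

lemma normal_measure_variance:
  assumes "v \<ge> 0"
  shows "has_bochner_integral (normal_measure \<mu> v) (\<lambda>x. (x - \<mu>)\<^sup>2) v"
proof (cases "v = 0")
  case True
  then show ?thesis
    using has_bochner_integral_return[of "\<lambda>x. (x - \<mu>)\<^sup>2" \<mu>] by (simp add: normal_measure_def)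
next
  case False
  then have "0 < \<bar>sqrt v\<bar>" by simp
  from normal_moment_even[OF this, of \<mu> 1]
  have "has_bochner_integral lborel (\<lambda>x. normal_density \<mu> (sqrt v) x * (x - \<mu>)\<^sup>2) v"
    using assms by (simp add: normal_density_abs)
  then show ?thesis
    unfolding normal_measure_nonzero[OF False] by (intro has_bochner_integral_density) auto
qed

lemma normal_measure_second_moment:
  assumes "v \<ge> 0"
  shows "has_bochner_integral (normal_measure \<mu> v) (\<lambda>t. t\<^sup>2) (v + \<mu>\<^sup>2)"
proof -
  have "has_bochner_integral (normal_measure \<mu> v)
      (\<lambda>t. (t - \<mu>)\<^sup>2 + 2 * \<mu> * (t - \<mu>) + \<mu>\<^sup>2) (v + 2 * \<mu> * 0 + \<mu>\<^sup>2)"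
    by (intro has_bochner_integral_add has_bochner_integral_mult_right normal_measure_variance[OF assms]
        normal_measure_centered_mean has_bochner_integral_const_prob prob_space_normal_measure)
  then show ?thesis by (simp add: power2_eq_square algebra_simps)
qed

lemma emeasure_normal_measure_singleton:
  assumes "v > 0"
  shows "emeasure (normal_measure \<mu> v) {c} = 0"
proof -
  have "AE x in lborel. x \<in> {c} \<longrightarrow> normal_density \<mu> (sqrt v) x = 0"
    by (rule eventually_mono[OF AE_lborel_singleton[of c]]) simp
  then have "{c} \<in> null_sets (density lborel (normal_density \<mu> (sqrt v)))"
    by (simp add: null_sets_density_iff)
  then show ?thesis using assms by (simp add: normal_measure_nonzero null_sets_def)
qed

section \<open>Products of Gaussian coordinates\<close>

lemma product_prob_space_normal_measure: "product_prob_space (\<lambda>j. normal_measure (\<mu> j) (v j))"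
  by (rule product_prob_spaceI) (rule prob_space_normal_measure)

lemma prob_space_gauss_vec: "prob_space (gauss_vec p \<mu> v)"
  unfolding gauss_vec_def by (rule prob_space_PiM) (rule prob_space_normal_measure)

lemma sets_gauss_vec [measurable_cong]: "sets (gauss_vec p \<mu> v) = sets (Pi\<^sub>M {..<p} (\<lambda>_. borel))"
  unfolding gauss_vec_def by (intro sets_PiM_cong) (auto simp: sets_normal_measure)

lemma (in product_prob_space) has_bochner_integral_PiM_prod:
  fixes f :: "'i \<Rightarrow> 'a \<Rightarrow> real"
  assumes I: "finite I" and J: "J \<subseteq> I"
    and f: "\<And>j. j \<in> J \<Longrightarrow> has_bochner_integral (M j) (f j) (c j)"
  shows "has_bochner_integral (Pi\<^sub>M I M) (\<lambda>x. \<Prod>j\<in>J. f j (x j)) (\<Prod>j\<in>J. c j)"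
proof -
  define F where "F l = (if l \<in> J then f l else (\<lambda>_. 1))" for l
  have F: "has_bochner_integral (M l) (F l) (if l \<in> J then c l else 1)" for l
  proof -
    interpret prob_space "M l" by (rule prob_space)
    show ?thesis
      using f by (cases "l \<in> J") (auto simp: F_def has_bochner_integral_iff prob_space.prob_space[OF prob_space])
  qed
  have "has_bochner_integral (Pi\<^sub>M I M) (\<lambda>x. \<Prod>l\<in>I. F l (x l)) (\<Prod>l\<in>I. if l \<in> J then c l else 1)"
    using F product_integrable_prod[OF I, of F] product_integral_prod[OF I, of F]
    by (simp add: has_bochner_integral_iff)
  moreover have "(\<Prod>l\<in>I. F l (x l)) = (\<Prod>j\<in>J. f j (x j))" for x
    by (rule prod.mono_neutral_cong_right) (use I J in \<open>auto simp: F_def\<close>)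
  moreover have "(\<Prod>l\<in>I. if l \<in> J then c l else 1) = (\<Prod>j\<in>J. c j)"
    by (rule prod.mono_neutral_cong_right) (use I J in auto)
  ultimately show ?thesis by simp
qed

lemma (in product_prob_space) has_bochner_integral_PiM_component:
  fixes f :: "'a \<Rightarrow> real"
  assumes "finite I" "j \<in> I" "has_bochner_integral (M j) f c"
  shows "has_bochner_integral (Pi\<^sub>M I M) (\<lambda>x. f (x j)) c"
  using has_bochner_integral_PiM_prod[where J="{j}" and f="\<lambda>_. f" and c="\<lambda>_. c"] assms by simp

lemma (in product_prob_space) has_bochner_integral_PiM_two_components:
  fixes f g :: "'a \<Rightarrow> real"
  assumes "finite I" "j \<in> I" "k \<in> I" "j \<noteq> k"
    and "has_bochner_integral (M j) f a" "has_bochner_integral (M k) g b"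
  shows "has_bochner_integral (Pi\<^sub>M I M) (\<lambda>x. f (x j) * g (x k)) (a * b)"
proof -
  have "has_bochner_integral (Pi\<^sub>M I M) (\<lambda>x. \<Prod>l\<in>{j, k}. (if l = j then f else g) (x l))
      (\<Prod>l\<in>{j, k}. if l = j then a else b)"
    by (rule has_bochner_integral_PiM_prod) (use assms in auto)
  then show ?thesis using assms(4) by simp
qed

lemma has_bochner_integral_gauss_vec_component:
  fixes f :: "real \<Rightarrow> real"
  assumes "j < p" "has_bochner_integral (normal_measure (\<mu> j) (v j)) f c"
  shows "has_bochner_integral (gauss_vec p \<mu> v) (\<lambda>x. f (x j)) c"
  using product_prob_space.has_bochner_integral_PiM_component[OF
      product_prob_space_normal_measure[of \<mu> v], of "{..<p}" j f c] assms
  by (simp add: gauss_vec_def)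

lemma has_bochner_integral_gaussian_affine_square:
  fixes \<mu> v b :: "'i \<Rightarrow> real"
  assumes I: "finite I" and v: "\<And>j. j \<in> I \<Longrightarrow> v j \<ge> 0"
  shows "has_bochner_integral (Pi\<^sub>M I (\<lambda>j. normal_measure (\<mu> j) (v j)))
     (\<lambda>x. ((\<Sum>j\<in>I. b j * (x j - \<mu> j)) + e)\<^sup>2) ((\<Sum>j\<in>I. (b j)\<^sup>2 * v j) + e\<^sup>2)"
proof -
  interpret product_prob_space "\<lambda>j. normal_measure (\<mu> j) (v j)"
    by (rule product_prob_space_normal_measure)
  let ?M = "Pi\<^sub>M I (\<lambda>j. normal_measure (\<mu> j) (v j))"
  interpret P: prob_space ?M by (rule prob_space_PiM) (rule prob_space_normal_measure)
  have pair: "has_bochner_integral ?M (\<lambda>x. b j * b k * ((x j - \<mu> j) * (x k - \<mu> k)))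
      (b j * b k * (if j = k then v j else 0))" if "j \<in> I" "k \<in> I" for j k
  proof (cases "j = k")
    case True
    have "has_bochner_integral ?M (\<lambda>x. (x j - \<mu> j)\<^sup>2) (v j)"
      by (rule has_bochner_integral_PiM_component[OF I that(1) normal_measure_variance[OF v[OF that(1)]]])
    then show ?thesis using True by (auto simp: power2_eq_square)
  next
    case False
    have "has_bochner_integral ?M (\<lambda>x. (x j - \<mu> j) * (x k - \<mu> k)) (0 * 0)"
      by (rule has_bochner_integral_PiM_two_components[OF I that False
            normal_measure_centered_mean normal_measure_centered_mean])
    from has_bochner_integral_mult_right[OF this, of "b j * b k"] show ?thesis using False by simp
  qed
  have lin: "has_bochner_integral ?M (\<lambda>x. 2 * e * (b j * (x j - \<mu> j))) 0" if "j \<in> I" for j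
    using has_bochner_integral_mult_right[OF has_bochner_integral_PiM_component[OF I that
          normal_measure_centered_mean], of "2 * e * b j"]
    by (simp add: mult.assoc)
  have expand: "((\<Sum>j\<in>I. b j * (x j - \<mu> j)) + e)\<^sup>2 =
     (\<Sum>j\<in>I. \<Sum>k\<in>I. b j * b k * ((x j - \<mu> j) * (x k - \<mu> k)))
       + (\<Sum>j\<in>I. 2 * e * (b j * (x j - \<mu> j))) + e\<^sup>2" for x
    by (simp add: power2_eq_square algebra_simps sum_distrib_left sum_distrib_right sum.distrib)
  have diag: "(\<Sum>k\<in>I. b j * b k * (if j = k then v j else 0)) = (b j)\<^sup>2 * v j" if "j \<in> I" for j
    using that I by (simp add: power2_eq_square if_distrib cong: if_cong)
  have "has_bochner_integral ?M
      (\<lambda>x. (\<Sum>j\<in>I. \<Sum>k\<in>I. b j * b k * ((x j - \<mu> j) * (x k - \<mu> k)))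
        + (\<Sum>j\<in>I. 2 * e * (b j * (x j - \<mu> j))) + e\<^sup>2)
      ((\<Sum>j\<in>I. \<Sum>k\<in>I. b j * b k * (if j = k then v j else 0)) + (\<Sum>j\<in>I. 0) + e\<^sup>2)"
    by (intro has_bochner_integral_add has_bochner_integral_sum pair lin
        has_bochner_integral_const_prob P.prob_space_axioms) auto
  then show ?thesis unfolding expand by (simp add: diag)
qed

lemma nn_integral_eq_has_bochner_integral:
  assumes "has_bochner_integral M f r" "\<And>x. 0 \<le> f x"
  shows "(\<integral>\<^sup>+ x. ennreal (f x) \<partial>M) = ennreal r"
  using assms nn_integral_eq_integral[of M f] by (auto simp: has_bochner_integral_iff)

lemma AE_PiM_normal_component_neq:
  assumes I: "finite I" and k: "k \<in> I" and v: "v k > 0"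
  shows "AE x in Pi\<^sub>M I (\<lambda>j. normal_measure (\<mu> j) (v j)). x k \<noteq> c"
proof -
  interpret product_prob_space "\<lambda>j. normal_measure (\<mu> j) (v j)" by (rule product_prob_space_normal_measure)
  define A where "A i = (if i = k then {c} else UNIV)" for i :: 'a
  show ?thesis
  proof (rule AE_I[where N="Pi\<^sub>E I A"])
    show "{x \<in> space (Pi\<^sub>M I (\<lambda>j. normal_measure (\<mu> j) (v j))). \<not> x k \<noteq> c} \<subseteq> Pi\<^sub>E I A"
      by (auto simp: space_PiM A_def PiE_iff extensional_def)
    have "emeasure (Pi\<^sub>M I (\<lambda>j. normal_measure (\<mu> j) (v j))) (Pi\<^sub>E I A) = (\<Prod>i\<in>I. emeasure (normal_measure (\<mu> i) (v i)) (A i))"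
      by (rule emeasure_PiM[OF I]) (auto simp: A_def)
    also have "\<dots> = 0"
      using I k emeasure_normal_measure_singleton[OF v, of "\<mu> k" c] by (auto simp: A_def)
    finally show "emeasure (Pi\<^sub>M I (\<lambda>j. normal_measure (\<mu> j) (v j))) (Pi\<^sub>E I A) = 0" .
    show "Pi\<^sub>E I A \<in> sets (Pi\<^sub>M I (\<lambda>j. normal_measure (\<mu> j) (v j)))"
      by (rule sets_PiM_I_finite[OF I]) (auto simp: A_def)
  qed
qed

section \<open>Risks of linear estimators\<close>

lemma risk_cong: "(\<And>x j. j < p \<Longrightarrow> \<delta> x j = \<delta>' x j) \<Longrightarrow> risk p d \<delta> \<theta> = risk p d \<delta>' \<theta>"
  unfolding risk_def by (intro nn_integral_cong arg_cong[where f=ennreal] sum.cong) auto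

lemma risk_lin_est:
  assumes d: "\<forall>j<p. d j \<ge> 0"
  shows "risk p d (lin_est p C) \<theta> =
    ennreal (\<Sum>i<p. (\<Sum>j<p. (C i j)\<^sup>2 * d j) + ((\<Sum>j<p. C i j * \<theta> j) - \<theta> i)\<^sup>2)"
proof -
  have eq: "(lin_est p C x i - \<theta> i)\<^sup>2
      = ((\<Sum>j<p. C i j * (x j - \<theta> j)) + ((\<Sum>j<p. C i j * \<theta> j) - \<theta> i))\<^sup>2" for x i
    by (simp add: lin_est_def algebra_simps sum_subtractf)
  have "has_bochner_integral (gauss_vec p \<theta> d) (\<lambda>x. \<Sum>i<p. (lin_est p C x i - \<theta> i)\<^sup>2)
      (\<Sum>i<p. (\<Sum>j<p. (C i j)\<^sup>2 * d j) + ((\<Sum>j<p. C i j * \<theta> j) - \<theta> i)\<^sup>2)"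
    unfolding eq gauss_vec_def
    by (intro has_bochner_integral_sum has_bochner_integral_gaussian_affine_square) (use d in auto)
  then show ?thesis
    unfolding risk_def by (rule nn_integral_eq_has_bochner_integral) (simp add: sum_nonneg)
qed

lemma risk_diagonal:
  assumes d: "\<forall>j<p. d j \<ge> 0"
  shows "risk p d (\<lambda>x j. k j * x j) \<theta> = ennreal (\<Sum>j<p. (k j)\<^sup>2 * d j + (k j - 1)\<^sup>2 * (\<theta> j)\<^sup>2)"
proof -
  define C where "C i j = (if i = j then k i else 0)" for i j :: nat
  have C: "(\<Sum>j<p. C i j * y j) = k i * y i" "(\<Sum>j<p. (C i j)\<^sup>2 * y j) = (k i)\<^sup>2 * y i"
    if "i < p" for i and y :: "nat \<Rightarrow> real"
    using that by (simp_all add: C_def if_distrib[where f="\<lambda>c. c * _"]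
        if_distrib[where f="\<lambda>c. c\<^sup>2 * _"] cong: if_cong)
  have "risk p d (\<lambda>x j. k j * x j) \<theta> = risk p d (lin_est p C) \<theta>"
    by (rule risk_cong) (simp add: lin_est_def C)
  also have "\<dots> = ennreal (\<Sum>i<p. (\<Sum>j<p. (C i j)\<^sup>2 * d j) + ((\<Sum>j<p. C i j * \<theta> j) - \<theta> i)\<^sup>2)"
    by (rule risk_lin_est[OF d])
  also have "\<dots> = ennreal (\<Sum>j<p. (k j)\<^sup>2 * d j + (k j - 1)\<^sup>2 * (\<theta> j)\<^sup>2)"
    by (intro arg_cong[where f=ennreal] sum.cong refl) (simp add: C, simp add: power2_eq_square algebra_simps)
  finally show ?thesis .
qed

lemma bayes_risk_diagonal:
  assumes d: "\<forall>j<p. d j \<ge> 0" and lam: "\<forall>j<p. lam j \<ge> 0"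
  shows "bayes_risk p d (\<lambda>x j. k j * x j) lam
    = ennreal (\<Sum>j<p. (k j)\<^sup>2 * d j + (k j - 1)\<^sup>2 * lam j)"
proof -
  have "has_bochner_integral (gauss_vec p (\<lambda>_. 0) lam)
      (\<lambda>\<theta>. \<Sum>j<p. (k j)\<^sup>2 * d j + (k j - 1)\<^sup>2 * (\<theta> j)\<^sup>2) (\<Sum>j<p. (k j)\<^sup>2 * d j + (k j - 1)\<^sup>2 * lam j)"
  proof (intro has_bochner_integral_sum has_bochner_integral_add
      has_bochner_integral_const_prob[OF prob_space_gauss_vec] has_bochner_integral_mult_right)
    fix j assume "j \<in> {..<p}"
    then show "has_bochner_integral (gauss_vec p (\<lambda>_. 0) lam) (\<lambda>\<theta>. (\<theta> j)\<^sup>2) (lam j)"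
      using normal_measure_variance[of "lam j" 0] lam
      by (intro has_bochner_integral_gauss_vec_component) auto
  qed
  then show ?thesis
    unfolding bayes_risk_def risk_diagonal[OF d]
    by (rule nn_integral_eq_has_bochner_integral) (use d in \<open>auto intro!: sum_nonneg\<close>)
qed

lemma exists_vertex_sum_squares_ge:
  fixes B :: "nat \<Rightarrow> nat \<Rightarrow> real"
  assumes lam: "\<forall>j<n. lam j \<ge> 0"
  shows "\<exists>\<theta>. (\<forall>j<n. (\<theta> j)\<^sup>2 = lam j) \<and> (\<forall>j\<ge>n. \<theta> j = undefined) \<and>
     (\<Sum>j<n. \<Sum>i<p. (B i j)\<^sup>2 * lam j) \<le> (\<Sum>i<p. (\<Sum>j<n. B i j * \<theta> j)\<^sup>2)"
  using lam
proof (induction n)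
  case 0
  show ?case by (rule exI[of _ "\<lambda>_. undefined"]) auto
next
  case (Suc n)
  then obtain \<theta> where th: "\<forall>j<n. (\<theta> j)\<^sup>2 = lam j" "\<forall>j\<ge>n. \<theta> j = undefined"
    "(\<Sum>j<n. \<Sum>i<p. (B i j)\<^sup>2 * lam j) \<le> (\<Sum>i<p. (\<Sum>j<n. B i j * \<theta> j)\<^sup>2)" by auto
  define S where "S i = (\<Sum>j<n. B i j * \<theta> j)" for i
  define s where "s = (\<Sum>i<p. S i * B i n)"
  \<comment> \<open>the sign of the new coordinate makes the cross term \<open>2 t s\<close> nonnegative\<close>
  define t where "t = (if s \<ge> 0 then sqrt (lam n) else - sqrt (lam n))"
  have "lam n \<ge> 0" using Suc.prems by auto
  then have t2: "t\<^sup>2 = lam n" and ts: "t * s \<ge> 0"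
    by (auto simp: t_def mult_nonneg_nonpos)
  define \<theta>' where "\<theta>' = \<theta>(n := t)"
  have inner: "(\<Sum>j<Suc n. B i j * \<theta>' j) = S i + B i n * t" for i
    by (simp add: \<theta>'_def S_def)
  have "(\<Sum>i<p. (\<Sum>j<Suc n. B i j * \<theta>' j)\<^sup>2)
      = (\<Sum>i<p. (S i)\<^sup>2 + 2 * t * (S i * B i n) + (B i n)\<^sup>2 * t\<^sup>2)"
    unfolding inner by (rule sum.cong) (auto simp: power2_eq_square algebra_simps)
  also have "\<dots> = (\<Sum>i<p. (S i)\<^sup>2) + 2 * (t * s) + (\<Sum>i<p. (B i n)\<^sup>2 * lam n)"
    by (simp add: sum.distrib sum_distrib_left s_def t2 mult.assoc)
  finally have eq: "(\<Sum>i<p. (\<Sum>j<Suc n. B i j * \<theta>' j)\<^sup>2)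
      = (\<Sum>i<p. (S i)\<^sup>2) + 2 * (t * s) + (\<Sum>i<p. (B i n)\<^sup>2 * lam n)" .
  show ?case
  proof (intro exI[of _ \<theta>'] conjI allI impI)
    fix j assume "j < Suc n"
    then show "(\<theta>' j)\<^sup>2 = lam j" using th(1) t2 by (cases "j = n") (auto simp: \<theta>'_def)
  next
    fix j assume "Suc n \<le> j"
    then show "\<theta>' j = undefined" using th(2) by (auto simp: \<theta>'_def)
  next
    show "(\<Sum>j<Suc n. \<Sum>i<p. (B i j)\<^sup>2 * lam j) \<le> (\<Sum>i<p. (\<Sum>j<Suc n. B i j * \<theta>' j)\<^sup>2)"
      unfolding eq using th(3) ts by (simp add: S_def)
  qed
qed

lemma linear_coordinate_risk_ge:
  fixes c d l :: real
  assumes "d > 0" "l \<ge> 0"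
  shows "d * l / (d + l) \<le> c\<^sup>2 * d + (c - 1)\<^sup>2 * l"
proof -
  have "(d + l) * (c\<^sup>2 * d + (c - 1)\<^sup>2 * l) - d * l = (c * (d + l) - l)\<^sup>2"
    by (simp add: power2_eq_square algebra_simps)
  then have "d * l \<le> (d + l) * (c\<^sup>2 * d + (c - 1)\<^sup>2 * l)"
    by (metis diff_ge_0_iff_ge zero_le_power2)
  then show ?thesis using assms by (simp add: divide_le_eq mult.commute)
qed

lemma bayes_coordinate_risk:
  fixes d l :: real
  assumes "d > 0" "l \<ge> 0"
  shows "(1 - d / (d + l))\<^sup>2 * d + (1 - d / (d + l) - 1)\<^sup>2 * l = d * l / (d + l)"
proof -
  have s: "d + l > 0" using assms by simp
  have "1 - d / (d + l) = l / (d + l)" using s by (simp add: field_simps)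
  then show ?thesis using s by (simp add: power2_eq_square divide_simps) (simp add: algebra_simps)
qed

lemma max_risk_lin_est_ge:
  assumes d: "\<forall>j<p. d j > 0" and lam: "\<forall>j<p. lam j \<ge> 0"
  shows "ennreal (\<Sum>j<p. d j * lam j / (d j + lam j)) \<le> max_risk p d (lin_est p C) lam"
proof -
  define B where "B i j = C i j - (if i = j then 1 else 0)" for i j
  obtain \<theta> where th: "\<forall>j<p. (\<theta> j)\<^sup>2 = lam j" "\<forall>j\<ge>p. \<theta> j = undefined"
     "(\<Sum>j<p. \<Sum>i<p. (B i j)\<^sup>2 * lam j) \<le> (\<Sum>i<p. (\<Sum>j<p. B i j * \<theta> j)\<^sup>2)"
    using exists_vertex_sum_squares_ge[of p lam B p] lam by auto
  have \<theta>_vertex: "\<theta> \<in> hyperrect p lam" using th(1,2) by (auto simp: hyperrect_def extensional_def)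
  have bias: "(\<Sum>j<p. C i j * \<theta> j) - \<theta> i = (\<Sum>j<p. B i j * \<theta> j)" if "i < p" for i
    using that by (simp add: B_def left_diff_distrib sum_subtractf if_distrib[where f="\<lambda>c. c * _"] cong: if_cong)
  have diag_C: "(\<Sum>j<p. (C j j)\<^sup>2 * d j) \<le> (\<Sum>i<p. \<Sum>j<p. (C i j)\<^sup>2 * d j)"
    by (intro sum_mono member_le_sum) (use d in \<open>auto intro: less_imp_le\<close>)
  have diag_B: "(\<Sum>j<p. (B j j)\<^sup>2 * lam j) \<le> (\<Sum>j<p. \<Sum>i<p. (B i j)\<^sup>2 * lam j)"
    by (intro sum_mono member_le_sum) (use lam in auto)
  have "(\<Sum>j<p. d j * lam j / (d j + lam j)) \<le> (\<Sum>j<p. (C j j)\<^sup>2 * d j + (B j j)\<^sup>2 * lam j)"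
    by (intro sum_mono) (use d lam in \<open>auto simp: B_def intro: linear_coordinate_risk_ge\<close>)
  also have "\<dots> \<le> (\<Sum>i<p. \<Sum>j<p. (C i j)\<^sup>2 * d j) + (\<Sum>i<p. (\<Sum>j<p. B i j * \<theta> j)\<^sup>2)"
    using diag_C diag_B th(3) by (simp add: sum.distrib)
  also have "\<dots> = (\<Sum>i<p. (\<Sum>j<p. (C i j)\<^sup>2 * d j) + ((\<Sum>j<p. C i j * \<theta> j) - \<theta> i)\<^sup>2)"
    by (simp add: sum.distrib bias)
  finally have "ennreal (\<Sum>j<p. d j * lam j / (d j + lam j)) \<le> risk p d (lin_est p C) \<theta>"
    using d by (subst risk_lin_est) (auto intro: ennreal_leI)
  also have "\<dots> \<le> max_risk p d (lin_est p C) lam"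
    unfolding max_risk_def using \<theta>_vertex by (rule SUP_upper)
  finally show ?thesis .
qed

lemma bayes_risk_bayes_rule:
  assumes d: "\<forall>j<p. d j > 0" and lam: "\<forall>j<p. lam j \<ge> 0"
  shows "bayes_risk p d (bayes_rule d lam) lam = ennreal (\<Sum>j<p. d j * lam j / (d j + lam j))"
proof -
  have "bayes_rule d lam = (\<lambda>x j. (1 - d j / (d j + lam j)) * x j)"
    by (simp add: bayes_rule_def fun_eq_iff)
  then have "bayes_risk p d (bayes_rule d lam) lam = bayes_risk p d (\<lambda>x j. (1 - d j / (d j + lam j)) * x j) lam"
    by simp
  also have "\<dots> = ennreal (\<Sum>j<p. (1 - d j / (d j + lam j))\<^sup>2 * d j + (1 - d j / (d j + lam j) - 1)\<^sup>2 * lam j)"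
    by (rule bayes_risk_diagonal) (use d lam in auto)
  also have "\<dots> = ennreal (\<Sum>j<p. d j * lam j / (d j + lam j))"
    using d lam by (intro arg_cong[where f=ennreal] sum.cong refl bayes_coordinate_risk) auto
  finally show ?thesis .
qed

lemma minimax_linear_risk_eq:
  assumes d: "\<forall>j<p. d j > 0" and lam: "\<forall>j<p. lam j \<ge> 0"
  shows "minimax_linear_risk p d lam = ennreal (\<Sum>j<p. d j * lam j / (d j + lam j))"
proof (rule antisym)
  define k where "k j = 1 - d j / (d j + lam j)" for j
  define C where "C i j = (if i = j then k i else 0)" for i j :: nat
  have "minimax_linear_risk p d lam \<le> max_risk p d (lin_est p C) lam"
    unfolding minimax_linear_risk_def by (rule INF_lower) simp
  also have "\<dots> \<le> ennreal (\<Sum>j<p. d j * lam j / (d j + lam j))"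
    unfolding max_risk_def
  proof (rule SUP_least)
    fix \<theta> assume \<theta>: "\<theta> \<in> hyperrect p lam"
    have "risk p d (lin_est p C) \<theta> = risk p d (\<lambda>x j. k j * x j) \<theta>"
      by (rule risk_cong) (simp add: lin_est_def C_def if_distrib[where f="\<lambda>c. c * _"] cong: if_cong)
    also have "\<dots> = ennreal (\<Sum>j<p. (k j)\<^sup>2 * d j + (k j - 1)\<^sup>2 * (\<theta> j)\<^sup>2)"
      using d by (simp add: risk_diagonal less_imp_le)
    also have "\<dots> \<le> ennreal (\<Sum>j<p. (k j)\<^sup>2 * d j + (k j - 1)\<^sup>2 * lam j)"
      using \<theta> by (intro ennreal_leI sum_mono add_left_mono mult_left_mono) (auto simp: hyperrect_def)
    also have "\<dots> = ennreal (\<Sum>j<p. d j * lam j / (d j + lam j))"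
      unfolding k_def using d lam by (intro arg_cong[where f=ennreal] sum.cong refl bayes_coordinate_risk) auto
    finally show "risk p d (lin_est p C) \<theta> \<le> ennreal (\<Sum>j<p. d j * lam j / (d j + lam j))" .
  qed
  finally show "minimax_linear_risk p d lam \<le> ennreal (\<Sum>j<p. d j * lam j / (d j + lam j))" .
  show "ennreal (\<Sum>j<p. d j * lam j / (d j + lam j)) \<le> minimax_linear_risk p d lam"
    unfolding minimax_linear_risk_def by (rule INF_greatest) (rule max_risk_lin_est_ge[OF d lam])
qed

section \<open>Stein's identity\<close>

lemma normal_density_has_real_derivative:
  assumes "v > 0"
  shows "(normal_density \<mu> (sqrt v) has_real_derivative
      (- (t - \<mu>) / v * normal_density \<mu> (sqrt v) t)) (at t)"
proof -
  have quad: "((\<lambda>t. - ((t - \<mu>) * (t - \<mu>)) / (2 * v)) has_real_derivative (- (t - \<mu>) / v)) (at t)"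
  proof -
    have "((\<lambda>t. (t - \<mu>) * (t - \<mu>)) has_real_derivative (1 * (t - \<mu>) + 1 * (t - \<mu>))) (at t)"
      using DERIV_mult[OF DERIV_diff[OF DERIV_ident DERIV_const[of \<mu>]]
          DERIV_diff[OF DERIV_ident DERIV_const[of \<mu>]]]
      by simp
    from DERIV_cdivide[OF DERIV_minus[OF this], of "2 * v"] show ?thesis
      by (rule DERIV_cong) (use assms in \<open>simp add: field_simps\<close>)
  qed
  have "((\<lambda>t. 1 / sqrt (2 * pi * v) * exp (- ((t - \<mu>) * (t - \<mu>)) / (2 * v))) has_real_derivative
      1 / sqrt (2 * pi * v) * (exp (- ((t - \<mu>) * (t - \<mu>)) / (2 * v)) * (- (t - \<mu>) / v))) (at t)"
    by (intro DERIV_cmult DERIV_fun_exp quad)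
  moreover have "normal_density \<mu> (sqrt v)
      = (\<lambda>t. 1 / sqrt (2 * pi * v) * exp (- ((t - \<mu>) * (t - \<mu>)) / (2 * v)))"
    using assms by (simp add: normal_density_def fun_eq_iff power2_eq_square)
  ultimately show ?thesis using assms by (simp add: field_simps)
qed

lemma normal_density_mult_bounded_tendsto_zero:
  assumes v: "v > 0" and h: "\<And>t. \<bar>h t\<bar> \<le> B"
  shows "((\<lambda>t. normal_density \<mu> (sqrt v) t * h t) \<longlongrightarrow> 0) at_top"
    and "((\<lambda>t. normal_density \<mu> (sqrt v) t * h t) \<longlongrightarrow> 0) at_bot"
proof -
  have eq: "normal_density \<mu> (sqrt v) = (\<lambda>t. 1 / sqrt (2 * pi * v) * exp (- ((t - \<mu>)\<^sup>2) / (2 * v)))"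
    using v by (simp add: normal_density_def fun_eq_iff)
  have "(normal_density \<mu> (sqrt v) \<longlongrightarrow> 0) at_top" "(normal_density \<mu> (sqrt v) \<longlongrightarrow> 0) at_bot"
    unfolding eq using v by real_asymp+
  moreover have "((\<lambda>t. normal_density \<mu> (sqrt v) t * h t) \<longlongrightarrow> 0) F"
    if "(normal_density \<mu> (sqrt v) \<longlongrightarrow> 0) F" for F
  proof (rule Lim_null_comparison[where g="\<lambda>t. B * normal_density \<mu> (sqrt v) t"])
    show "\<forall>\<^sub>F t in F. norm (normal_density \<mu> (sqrt v) t * h t) \<le> B * normal_density \<mu> (sqrt v) t"
      by (rule always_eventually) (auto simp: abs_mult intro: mult_left_mono[OF h, simplified mult.commute])
    show "((\<lambda>t. B * normal_density \<mu> (sqrt v) t) \<longlongrightarrow> 0) F"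
      using tendsto_mult_left[OF that, of B] by simp
  qed
  ultimately show "((\<lambda>t. normal_density \<mu> (sqrt v) t * h t) \<longlongrightarrow> 0) at_top"
    and "((\<lambda>t. normal_density \<mu> (sqrt v) t * h t) \<longlongrightarrow> 0) at_bot"
    by blast+
qed

lemma integrable_normal_density_mult_bounded:
  fixes g :: "real \<Rightarrow> real"
  assumes \<sigma>: "\<sigma> > 0" and [measurable]: "g \<in> borel_measurable borel" and g: "\<And>t. \<bar>g t\<bar> \<le> B"
  shows "integrable lborel (\<lambda>t. normal_density \<mu> \<sigma> t * ((t - \<mu>) ^ k * g t))"
proof (rule Bochner_Integration.integrable_bound[OF integrable_mult_right[OF
      integrable_normal_moment_abs[OF \<sigma>], of B]])
  have B: "0 \<le> B" using g[of 0] by linarith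
  show "AE t in lborel. norm (normal_density \<mu> \<sigma> t * ((t - \<mu>) ^ k * g t))
      \<le> norm (B * (normal_density \<mu> \<sigma> t * \<bar>t - \<mu>\<bar> ^ k))"
  proof (rule AE_I2)
    fix t
    have "\<bar>normal_density \<mu> \<sigma> t * ((t - \<mu>) ^ k * g t)\<bar> = normal_density \<mu> \<sigma> t * \<bar>t - \<mu>\<bar> ^ k * \<bar>g t\<bar>"
      by (simp add: abs_mult power_abs)
    also have "\<dots> \<le> normal_density \<mu> \<sigma> t * \<bar>t - \<mu>\<bar> ^ k * B"
      by (intro mult_left_mono g) auto
    finally show "norm (normal_density \<mu> \<sigma> t * ((t - \<mu>) ^ k * g t))
        \<le> norm (B * (normal_density \<mu> \<sigma> t * \<bar>t - \<mu>\<bar> ^ k))"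
      using B by (simp add: abs_mult mult_ac)
  qed
qed measurable

lemma normal_density_integration_by_parts:
  fixes h h' :: "real \<Rightarrow> real" and \<mu> v :: real
  assumes v: "v > 0"
    and der: "\<And>t. (h has_real_derivative h' t) (at t)" and cont: "\<And>t. isCont h' t"
    and hb: "\<And>t. \<bar>h t\<bar> \<le> B" and h'b: "\<And>t. \<bar>h' t\<bar> \<le> B'"
  defines "\<phi> \<equiv> normal_density \<mu> (sqrt v)"
  shows "(\<integral>t. \<phi> t * ((t - \<mu>) * h t) \<partial>lborel) = v * (\<integral>t. \<phi> t * h' t \<partial>lborel)"
proof -
  have [measurable]: "h \<in> borel_measurable borel"
    using der by (intro borel_measurable_continuous_onI continuous_at_imp_continuous_on)
      (auto intro: DERIV_isCont)
  have [measurable]: "h' \<in> borel_measurable borel"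
    using cont by (intro borel_measurable_continuous_onI continuous_at_imp_continuous_on) auto
  have intA: "integrable lborel (\<lambda>t. \<phi> t * ((t - \<mu>) * h t))"
    using integrable_normal_density_mult_bounded[of "sqrt v" h B \<mu> 1] hb v by (simp add: \<phi>_def)
  have intB: "integrable lborel (\<lambda>t. \<phi> t * h' t)"
    using integrable_normal_density_mult_bounded[of "sqrt v" h' B' \<mu> 0] h'b v by (simp add: \<phi>_def)
  define g where "g t = \<phi> t * h' t - (1 / v) * (\<phi> t * ((t - \<mu>) * h t))" for t
  have "(LBINT t=-\<infinity>..\<infinity>. g t) = 0 - 0"
  proof (rule interval_integral_FTC_integrable[where F="\<lambda>t. \<phi> t * h t"])
    fix x :: real
    have "((\<lambda>t. \<phi> t * h t) has_real_derivative \<phi> x * h' x + (- (x - \<mu>) / v * \<phi> x) * h x) (at x)"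
      unfolding \<phi>_def by (intro DERIV_mult' normal_density_has_real_derivative[OF v] der)
    also have "\<phi> x * h' x + (- (x - \<mu>) / v * \<phi> x) * h x = g x"
      by (simp add: g_def divide_inverse algebra_simps)
    finally show "((\<lambda>t. \<phi> t * h t) has_vector_derivative g x) (at x)"
      by (simp add: has_real_derivative_iff_has_vector_derivative)
    have "isCont \<phi> x"
      unfolding \<phi>_def using normal_density_has_real_derivative[OF v] by (rule DERIV_isCont)
    then show "isCont g x" unfolding g_def using cont[of x] DERIV_isCont[OF der]
      by (intro continuous_intros) auto
  next
    show "set_integrable lborel (einterval (- \<infinity>) \<infinity>) g"
      using intA intB by (simp add: set_integrable_def g_def)
  next
    show "(((\<lambda>t. \<phi> t * h t) \<circ> real_of_ereal) \<longlongrightarrow> 0) (at_right (- \<infinity>))"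
      "(((\<lambda>t. \<phi> t * h t) \<circ> real_of_ereal) \<longlongrightarrow> 0) (at_left \<infinity>)"
      unfolding ereal_tendsto_simps \<phi>_def
      using normal_density_mult_bounded_tendsto_zero[OF v hb] by auto
  qed simp
  then have "integral\<^sup>L lborel g = 0"
    by (simp add: interval_lebesgue_integral_def set_lebesgue_integral_def)
  then have "integral\<^sup>L lborel (\<lambda>t. \<phi> t * h' t)
      - (1 / v) * integral\<^sup>L lborel (\<lambda>t. \<phi> t * ((t - \<mu>) * h t)) = 0"
    unfolding g_def using intA intB by simp
  then show ?thesis using v by (simp add: field_simps)
qed

lemma stein_identity:
  fixes h h' :: "real \<Rightarrow> real"
  assumes v: "v > 0"
    and der: "\<And>t. (h has_real_derivative h' t) (at t)" and cont: "\<And>t. isCont h' t"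
    and hb: "\<And>t. \<bar>h t\<bar> \<le> B" and h'b: "\<And>t. \<bar>h' t\<bar> \<le> B'"
  shows "(\<integral>t. (t - \<mu>) * h t \<partial>normal_measure \<mu> v) = v * (\<integral>t. h' t \<partial>normal_measure \<mu> v)"
proof -
  have [measurable]: "h \<in> borel_measurable borel"
    using der by (intro borel_measurable_continuous_onI continuous_at_imp_continuous_on)
      (auto intro: DERIV_isCont)
  have [measurable]: "h' \<in> borel_measurable borel"
    using cont by (intro borel_measurable_continuous_onI continuous_at_imp_continuous_on) auto
  show ?thesis
    unfolding normal_measure_nonzero[OF less_imp_neq[OF v, symmetric]]
    using normal_density_integration_by_parts[OF v der cont hb h'b]
    by (subst (1 2) integral_density) auto
qed

lemma abs_ratio_derivative_le:
  fixes a t q :: real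
  assumes aq: "(a * t)\<^sup>2 \<le> q" and q: "0 < q"
  shows "\<bar>a / q - 2 * a ^ 3 * t\<^sup>2 / q\<^sup>2\<bar> \<le> 3 * \<bar>a\<bar> / q"
proof -
  have e: "2 * a ^ 3 * t\<^sup>2 / q\<^sup>2 = 2 * a * ((a * t)\<^sup>2 / q) * (1 / q)"
    using q by (simp add: power2_eq_square power3_eq_cube field_simps)
  have b: "(a * t)\<^sup>2 / q \<le> 1" using aq q by simp
  have "\<bar>a / q - 2 * a ^ 3 * t\<^sup>2 / q\<^sup>2\<bar> \<le> \<bar>a / q\<bar> + \<bar>2 * a ^ 3 * t\<^sup>2 / q\<^sup>2\<bar>"
    by (rule abs_triangle_ineq4)
  also have "\<dots> = \<bar>a\<bar> * (1 / q) + 2 * \<bar>a\<bar> * ((a * t)\<^sup>2 / q) * (1 / q)"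
    unfolding e using q by (simp add: abs_mult)
  also have "\<dots> \<le> \<bar>a\<bar> * (1 / q) + 2 * \<bar>a\<bar> * 1 * (1 / q)"
    by (intro add_left_mono mult_right_mono mult_left_mono b) (use q in auto)
  finally show ?thesis by simp
qed

lemma stein_identity_ratio:
  fixes a r :: real
  assumes v: "v > 0" and r: "r > 0"
  shows "(\<integral>t. (t - \<mu>) * (a * t / ((a * t)\<^sup>2 + r)) \<partial>normal_measure \<mu> v)
       = v * (\<integral>t. a / ((a * t)\<^sup>2 + r) - 2 * a ^ 3 * t\<^sup>2 / ((a * t)\<^sup>2 + r)\<^sup>2 \<partial>normal_measure \<mu> v)"
proof (rule stein_identity[OF v])
  fix t :: real
  define q where "q = (a * t)\<^sup>2 + r"
  have q: "0 < q" "r \<le> q" "(a * t)\<^sup>2 \<le> q" using r by (simp_all add: q_def add_nonneg_pos)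
  have "((\<lambda>t. a * t / ((a * t)\<^sup>2 + r)) has_real_derivative
      ((a * 1) * ((a * t)\<^sup>2 + r) - (a * t) * (2 * (a * t) * (a * 1))) / ((a * t)\<^sup>2 + r)\<^sup>2) (at t)"
    using q unfolding q_def
    by (intro DERIV_divide DERIV_cmult DERIV_ident DERIV_add DERIV_const derivative_eq_intros)
      (auto simp: power2_eq_square)
  moreover have "((a * 1) * ((a * t)\<^sup>2 + r) - (a * t) * (2 * (a * t) * (a * 1))) / ((a * t)\<^sup>2 + r)\<^sup>2
     = a / ((a * t)\<^sup>2 + r) - 2 * a ^ 3 * t\<^sup>2 / ((a * t)\<^sup>2 + r)\<^sup>2"
    using q unfolding q_def[symmetric] by (simp add: field_simps power2_eq_square power3_eq_cube)
  ultimately show "((\<lambda>t. a * t / ((a * t)\<^sup>2 + r)) has_real_derivative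
      a / ((a * t)\<^sup>2 + r) - 2 * a ^ 3 * t\<^sup>2 / ((a * t)\<^sup>2 + r)\<^sup>2) (at t)"
    by simp
  show "isCont (\<lambda>t. a / ((a * t)\<^sup>2 + r) - 2 * a ^ 3 * t\<^sup>2 / ((a * t)\<^sup>2 + r)\<^sup>2) t"
    using q unfolding q_def by (intro continuous_intros) auto
  have "\<bar>a * t\<bar> \<le> q + 1"
    using sum_squares_bound[of "\<bar>a * t\<bar>" 1] q(3) by (simp add: power2_abs)
  then have "\<bar>a * t\<bar> / q \<le> 1 + 1 / q" using q by (simp add: field_simps)
  also have "\<dots> \<le> 1 + 1 / r" using q r by (simp add: frac_le)
  finally show "\<bar>a * t / ((a * t)\<^sup>2 + r)\<bar> \<le> 1 + 1 / r" using q by (simp add: q_def)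
  have "\<bar>a / q - 2 * a ^ 3 * t\<^sup>2 / q\<^sup>2\<bar> \<le> 3 * \<bar>a\<bar> / q" by (rule abs_ratio_derivative_le[OF q(3,1)])
  also have "\<dots> \<le> 3 * \<bar>a\<bar> / r" using q r by (intro divide_left_mono) auto
  finally show "\<bar>a / ((a * t)\<^sup>2 + r) - 2 * a ^ 3 * t\<^sup>2 / ((a * t)\<^sup>2 + r)\<^sup>2\<bar> \<le> 3 * \<bar>a\<bar> / r"
    by (simp add: q_def)
qed

text \<open>Stein's identity in the coordinate \<open>j\<close> for the field \<open>x \<mapsto> a\<^sub>j x\<^sub>j / Q(x)\<close>: integrate out
  \<open>x\<^sub>j\<close> first; a second coordinate \<open>k\<close> with \<open>a\<^sub>k \<noteq> 0\<close> keeps the remaining part \<open>r\<close> of \<open>Q\<close>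
  almost surely positive, so each slice is the one-dimensional identity.\<close>

lemma stein_identity_PiM:
  fixes a \<mu> v :: "'a \<Rightarrow> real" and I :: "'a set"
  defines "M \<equiv> Pi\<^sub>M I (\<lambda>j. normal_measure (\<mu> j) (v j))"
    and "Q \<equiv> \<lambda>x. \<Sum>l\<in>I. (a l * x l)\<^sup>2"
  assumes I: "finite I" and j: "j \<in> I" "v j > 0"
    and k: "k \<in> I" "k \<noteq> j" "a k \<noteq> 0" "v k > 0"
    and int1: "integrable M (\<lambda>x. (x j - \<mu> j) * (a j * x j / Q x))"
    and int2: "integrable M (\<lambda>x. a j / Q x - 2 * a j ^ 3 * (x j)\<^sup>2 / (Q x)\<^sup>2)"
  shows "(\<integral>x. (x j - \<mu> j) * (a j * x j / Q x) \<partial>M)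
       = v j * (\<integral>x. a j / Q x - 2 * a j ^ 3 * (x j)\<^sup>2 / (Q x)\<^sup>2 \<partial>M)"
proof -
  interpret product_prob_space "\<lambda>j. normal_measure (\<mu> j) (v j)"
    by (rule product_prob_space_normal_measure)
  define N where "N = (\<lambda>j. normal_measure (\<mu> j) (v j))"
  define J where "J = I - {j}"
  have IJ: "I = insert j J" and J: "finite J" "j \<notin> J" "k \<in> J"
    using I j k by (auto simp: J_def)
  define r where "r y = (\<Sum>l\<in>J. (a l * y l)\<^sup>2)" for y
  have Q_upd: "Q (y(j := t)) = (a j * t)\<^sup>2 + r y" for y t
  proof -
    have "(\<Sum>l\<in>J. (a l * (y(j := t)) l)\<^sup>2) = r y"
      unfolding r_def using J by (intro sum.cong) auto
    then show ?thesis unfolding Q_def IJ using J by simp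
  qed
  define F1 where "F1 y t = (t - \<mu> j) * (a j * t / ((a j * t)\<^sup>2 + r y))" for y t
  define F2 where "F2 y t = a j / ((a j * t)\<^sup>2 + r y) - 2 * a j ^ 3 * t\<^sup>2 / ((a j * t)\<^sup>2 + r y)\<^sup>2"
    for y t
  have sf: "sigma_finite_measure (N j)"
    unfolding N_def using prob_space_imp_sigma_finite[OF prob_space_normal_measure] .
  have [measurable_cong]: "sets (N l) = sets borel" for l by (simp add: N_def sets_normal_measure)
  have [measurable]: "r \<in> borel_measurable (Pi\<^sub>M J N)" unfolding r_def by measurable
  have m1: "(\<lambda>y. \<integral>t. F1 y t \<partial>N j) \<in> borel_measurable (Pi\<^sub>M J N)"
    by (rule sigma_finite_measure.borel_measurable_lebesgue_integral[OF sf])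
      (unfold F1_def, measurable)
  have m2: "(\<lambda>y. \<integral>t. F2 y t \<partial>N j) \<in> borel_measurable (Pi\<^sub>M J N)"
    by (rule sigma_finite_measure.borel_measurable_lebesgue_integral[OF sf])
      (unfold F2_def, measurable)
  have M: "M = Pi\<^sub>M (insert j J) N" unfolding M_def N_def IJ ..
  have "(\<integral>x. (x j - \<mu> j) * (a j * x j / Q x) \<partial>M) = (\<integral>y. (\<integral>t. F1 y t \<partial>N j) \<partial>Pi\<^sub>M J N)"
    using product_integral_insert[OF J(1,2) int1[unfolded M N_def]]
    by (simp add: M N_def Q_upd F1_def)
  also have "\<dots> = (\<integral>y. v j * (\<integral>t. F2 y t \<partial>N j) \<partial>Pi\<^sub>M J N)"
  proof (rule integral_cong_AE)
    show "AE y in Pi\<^sub>M J N. (\<integral>t. F1 y t \<partial>N j) = v j * (\<integral>t. F2 y t \<partial>N j)"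
      using AE_PiM_normal_component_neq[where I=J and k=k and v=v and \<mu>=\<mu> and c=0, OF J(1,3) k(4), folded N_def]
    proof eventually_elim
      case (elim y)
      have "0 < (a k * y k)\<^sup>2" using elim k by simp
      also have "\<dots> \<le> r y" unfolding r_def by (rule member_le_sum) (use J in auto)
      finally show ?case unfolding F1_def F2_def N_def by (rule stein_identity_ratio[OF j(2)])
    qed
  qed (use m1 m2 in measurable)
  also have "\<dots> = v j * (\<integral>x. a j / Q x - 2 * a j ^ 3 * (x j)\<^sup>2 / (Q x)\<^sup>2 \<partial>M)"
    using product_integral_insert[OF J(1,2) int2[unfolded M N_def]]
    by (simp add: M N_def Q_upd F2_def)
  finally show ?thesis .
qed

section \<open>Integrability of \<open>1 / \<Sum>\<^sub>k (a\<^sub>k x\<^sub>k)\<^sup>2\<close>\<close>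

lemma nn_integral_powr_01: "(\<integral>\<^sup>+ t. ennreal (indicator {0..1} t * t powr (-2/3)) \<partial>lborel) = ennreal 3"
proof -
  have "((\<lambda>x::real. x powr (-2/3)) has_integral (1 powr (-2/3+1) / (-2/3+1))) {0..1}"
    by (rule has_integral_powr_from_0) auto
  then have "((\<lambda>x::real. if x \<in> {0..1} then x powr (-2/3) else 0) has_integral 3) UNIV"
    by (subst has_integral_restrict_UNIV) simp
  then have "((\<lambda>x::real. indicator {0..1} x * x powr (-2/3)) has_integral 3) UNIV"
    by (rule has_integral_eq[rotated]) (simp add: indicator_def)
  then show ?thesis
    by (intro nn_integral_has_integral_lborel) (auto simp: indicator_def)
qed

lemma nn_integral_abs_powr_finite:
  "(\<integral>\<^sup>+ t. ennreal (indicator {-1..1} t * \<bar>t\<bar> powr (-2/3)) \<partial>lborel) < \<infinity>"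
proof -
  let ?f = "\<lambda>t::real. ennreal (indicator {0..1} t * t powr (-2/3))"
  have m: "?f \<in> borel_measurable borel" by measurable
  have "(\<integral>\<^sup>+ t. ennreal (indicator {-1..1} t * \<bar>t\<bar> powr (-2/3)) \<partial>lborel)
      \<le> (\<integral>\<^sup>+ t. ?f t + ?f (- t) \<partial>lborel)"
    by (intro nn_integral_mono) (auto simp: indicator_def intro: add_increasing add_increasing2)
  also have "\<dots> = (\<integral>\<^sup>+ t. ?f t \<partial>lborel) + (\<integral>\<^sup>+ t. ?f (- t) \<partial>lborel)"
    by (rule nn_integral_add) auto
  also have "(\<integral>\<^sup>+ t. ?f (- t) \<partial>lborel) = (\<integral>\<^sup>+ t. ?f t \<partial>lborel)"
    using nn_integral_real_affine[OF m, of "-1" 0] by simp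
  finally have "(\<integral>\<^sup>+ t. ennreal (indicator {-1..1} t * \<bar>t\<bar> powr (-2/3)) \<partial>lborel) \<le> 6"
    using nn_integral_powr_01 by simp
  then show ?thesis by (rule le_less_trans) simp
qed

lemma normal_density_le:
  assumes "v > 0"
  shows "normal_density \<mu> (sqrt v) t \<le> 1 / sqrt (2 * pi * v)"
proof -
  have "exp (- ((t - \<mu>)\<^sup>2 / (2 * v))) \<le> 1" using assms by simp
  then have "1 / sqrt (2 * pi * v) * exp (- ((t - \<mu>)\<^sup>2 / (2 * v))) \<le> 1 / sqrt (2 * pi * v) * 1"
    by (intro mult_left_mono) (use assms in auto)
  then show ?thesis using assms by (simp add: normal_density_def)
qed

lemma bounded_mult_abs_powr_le:
  fixes f A K t :: real
  assumes f: "0 \<le> f" "f \<le> K" and A: "0 \<le> A"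
  shows "f * (A * \<bar>t\<bar> powr (-2/3)) \<le> A * K * (indicator {-1..1} t * \<bar>t\<bar> powr (-2/3)) + A * f"
proof (cases "\<bar>t\<bar> \<le> 1")
  case True
  then have "f * (A * \<bar>t\<bar> powr (-2/3)) \<le> K * (A * \<bar>t\<bar> powr (-2/3))"
    by (intro mult_right_mono f) (use A in auto)
  moreover have "0 \<le> A * f" using A f by simp
  ultimately show ?thesis using True by (auto simp: indicator_def mult_ac intro: add_increasing2)
next
  case False
  have "1 \<le> \<bar>t\<bar> powr (2/3)" by (rule ge_one_powr_ge_zero) (use False in auto)
  then have "\<bar>t\<bar> powr (-2/3) \<le> 1" by (simp add: powr_minus_divide divide_le_eq)
  then have "f * (A * \<bar>t\<bar> powr (-2/3)) \<le> f * (A * 1)"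
    by (intro mult_left_mono) (use A f in auto)
  then show ?thesis using False A f by (auto simp: indicator_def mult_ac)
qed

definition powr_majorant :: "real \<Rightarrow> real \<Rightarrow> ennreal" where
  "powr_majorant c t = (if t = 0 then \<infinity> else ennreal (\<bar>c * t\<bar> powr (-2/3)))"

lemma borel_measurable_powr_majorant [measurable]: "powr_majorant c \<in> borel_measurable borel"
  unfolding powr_majorant_def[abs_def] by measurable

lemma nn_integral_powr_majorant_finite:
  assumes v: "v > 0"
  shows "(\<integral>\<^sup>+ t. powr_majorant c t \<partial>normal_measure \<mu> v) < \<infinity>"
proof -
  define \<phi> where "\<phi> = normal_density \<mu> (sqrt v)"
  define K where "K = 1 / sqrt (2 * pi * v)"
  define A where "A = \<bar>c\<bar> powr (-2/3)"
  have A: "0 \<le> A" and K: "0 \<le> K" using v by (auto simp: A_def K_def)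
  have \<phi>: "0 \<le> \<phi> t" "\<phi> t \<le> K" for t unfolding \<phi>_def K_def using normal_density_le[OF v] by auto
  have "(\<integral>\<^sup>+ t. powr_majorant c t \<partial>normal_measure \<mu> v)
     = (\<integral>\<^sup>+ t. ennreal (\<phi> t) * powr_majorant c t \<partial>lborel)"
    using v by (simp add: normal_measure_nonzero nn_integral_density \<phi>_def)
  also have "\<dots> = (\<integral>\<^sup>+ t. ennreal (\<phi> t * (A * \<bar>t\<bar> powr (-2/3))) \<partial>lborel)"
    using AE_lborel_singleton[of 0]
    by (intro nn_integral_cong_AE, eventually_elim)
      (simp add: powr_majorant_def A_def abs_mult powr_mult ennreal_mult'[symmetric] \<phi>_def mult_ac)
  also have "\<dots> \<le> (\<integral>\<^sup>+ t. ennreal (A * K) * ennreal (indicator {-1..1} t * \<bar>t\<bar> powr (-2/3))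
      + ennreal A * ennreal (\<phi> t) \<partial>lborel)"
    using bounded_mult_abs_powr_le[OF \<phi> A] A K \<phi>
    by (intro nn_integral_mono)
      (simp add: ennreal_mult'[symmetric] ennreal_plus[symmetric] ennreal_leI del: ennreal_plus)
  also have "\<dots> = ennreal (A * K) * (\<integral>\<^sup>+ t. ennreal (indicator {-1..1} t * \<bar>t\<bar> powr (-2/3)) \<partial>lborel)
      + ennreal A * (\<integral>\<^sup>+ t. ennreal (\<phi> t) \<partial>lborel)"
    by (subst nn_integral_add) (auto simp: nn_integral_cmult \<phi>_def)
  also have "(\<integral>\<^sup>+ t. ennreal (\<phi> t) \<partial>lborel) = 1"
    unfolding \<phi>_def using v
    by (subst nn_integral_eq_integral) (auto intro: integrable_normal_density)
  also have "ennreal (A * K) * (\<integral>\<^sup>+ t. ennreal (indicator {-1..1} t * \<bar>t\<bar> powr (-2/3)) \<partial>lborel)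
      + ennreal A * 1 < \<infinity>"
    using nn_integral_abs_powr_finite by (simp add: ennreal_mult_less_top)
  finally show ?thesis .
qed

lemma inverse_sum_three_squares_le:
  fixes u1 u2 u3 :: real
  assumes "u1 > 0" "u2 > 0" "u3 > 0"
  shows "1 / (u1\<^sup>2 + u2\<^sup>2 + u3\<^sup>2) \<le> u1 powr (-2/3) * u2 powr (-2/3) * u3 powr (-2/3)"
proof -
  define m where "m = max u1 (max u2 u3)"
  have m: "m > 0" using assms by (simp add: m_def)
  have "u1 powr (2/3) * u2 powr (2/3) * u3 powr (2/3) \<le> m powr (2/3) * m powr (2/3) * m powr (2/3)"
    using assms by (intro mult_mono powr_mono2) (auto simp: m_def)
  also have "\<dots> = m\<^sup>2" using m by (simp add: powr_add[symmetric] powr_numeral)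
  also have "\<dots> \<le> u1\<^sup>2 + u2\<^sup>2 + u3\<^sup>2" by (auto simp: m_def max_def)
  finally have "1 / (u1\<^sup>2 + u2\<^sup>2 + u3\<^sup>2) \<le> 1 / (u1 powr (2/3) * u2 powr (2/3) * u3 powr (2/3))"
    using assms by (intro divide_left_mono) (auto intro!: mult_pos_pos add_pos_pos)
  then show ?thesis by (simp add: powr_minus_divide)
qed

lemma inverse_sum_squares_le_powr_majorant:
  fixes a x :: "'a \<Rightarrow> real"
  assumes I: "finite I" "k1 \<in> I" "k2 \<in> I" "k3 \<in> I" and k: "k1 \<noteq> k2" "k1 \<noteq> k3" "k2 \<noteq> k3"
    and a: "a k1 \<noteq> 0" "a k2 \<noteq> 0" "a k3 \<noteq> 0"
  shows "ennreal (1 / (\<Sum>k\<in>I. (a k * x k)\<^sup>2))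
    \<le> powr_majorant (a k1) (x k1) * powr_majorant (a k2) (x k2) * powr_majorant (a k3) (x k3)"
proof (cases "x k1 = 0 \<or> x k2 = 0 \<or> x k3 = 0")
  case True
  then show ?thesis using a by (auto simp: powr_majorant_def ennreal_mult_eq_top_iff)
next
  case False
  define y where "y k = \<bar>a k * x k\<bar>" for k
  have y: "y k1 > 0" "y k2 > 0" "y k3 > 0" using False a by (auto simp: y_def)
  have "(y k1)\<^sup>2 + (y k2)\<^sup>2 + (y k3)\<^sup>2 = (\<Sum>k\<in>{k1, k2, k3}. (a k * x k)\<^sup>2)"
    using k by (simp add: y_def)
  also have "\<dots> \<le> (\<Sum>k\<in>I. (a k * x k)\<^sup>2)" by (rule sum_mono2) (use I in auto)
  finally have le: "(y k1)\<^sup>2 + (y k2)\<^sup>2 + (y k3)\<^sup>2 \<le> (\<Sum>k\<in>I. (a k * x k)\<^sup>2)" .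
  have "1 / (\<Sum>k\<in>I. (a k * x k)\<^sup>2) \<le> 1 / ((y k1)\<^sup>2 + (y k2)\<^sup>2 + (y k3)\<^sup>2)"
    using y by (intro divide_left_mono[OF le]) (auto intro!: mult_pos_pos add_pos_pos order.strict_trans2[OF _ le])
  also have "\<dots> \<le> y k1 powr (-2/3) * y k2 powr (-2/3) * y k3 powr (-2/3)"
    using y by (rule inverse_sum_three_squares_le)
  finally have "ennreal (1 / (\<Sum>k\<in>I. (a k * x k)\<^sup>2))
      \<le> ennreal (y k1 powr (-2/3) * y k2 powr (-2/3) * y k3 powr (-2/3))"
    by (rule ennreal_leI)
  then show ?thesis
    using False by (simp add: powr_majorant_def y_def ennreal_mult'')
qed

lemma integrable_inverse_sum_squares:
  fixes a :: "'a \<Rightarrow> real"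
  assumes I: "finite I" "k1 \<in> I" "k2 \<in> I" "k3 \<in> I" and k: "k1 \<noteq> k2" "k1 \<noteq> k3" "k2 \<noteq> k3"
    and a: "a k1 \<noteq> 0" "a k2 \<noteq> 0" "a k3 \<noteq> 0" and v: "v k1 > 0" "v k2 > 0" "v k3 > 0"
  shows "integrable (Pi\<^sub>M I (\<lambda>j. normal_measure (\<mu> j) (v j))) (\<lambda>x. 1 / (\<Sum>k\<in>I. (a k * x k)\<^sup>2))"
proof -
  interpret product_prob_space "\<lambda>j. normal_measure (\<mu> j) (v j)"
    by (rule product_prob_space_normal_measure)
  define G where "G l = (if l \<in> {k1, k2, k3} then powr_majorant (a l) else (\<lambda>_. 1))" for l
  have G: "G l \<in> borel_measurable (normal_measure (\<mu> l) (v l))" for l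
    unfolding G_def by (simp add: measurable_cong_sets[OF sets_normal_measure refl])
  have "(\<Prod>l\<in>I. G l (x l)) = (\<Prod>l\<in>{k1, k2, k3}. G l (x l))" for x
    by (rule prod.mono_neutral_right) (use I in \<open>auto simp: G_def\<close>)
  then have "ennreal (norm (1 / (\<Sum>k\<in>I. (a k * x k)\<^sup>2))) \<le> (\<Prod>l\<in>I. G l (x l))" for x
    using inverse_sum_squares_le_powr_majorant[OF I k a, of x] k
    by (simp add: G_def sum_nonneg mult_ac)
  then have "(\<integral>\<^sup>+ x. ennreal (norm (1 / (\<Sum>k\<in>I. (a k * x k)\<^sup>2))) \<partial>Pi\<^sub>M I (\<lambda>j. normal_measure (\<mu> j) (v j)))
      \<le> (\<Prod>l\<in>I. integral\<^sup>N (normal_measure (\<mu> l) (v l)) (G l))"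
    by (subst product_nn_integral_prod[OF I(1) G, symmetric]) (rule nn_integral_mono)
  also have "\<dots> < \<top>"
  proof (subst less_top[symmetric], subst ennreal_prod_eq_top, safe)
    fix l assume "l \<in> I" and top: "integral\<^sup>N (normal_measure (\<mu> l) (v l)) (G l) = \<top>"
    show False
    proof (cases "l \<in> {k1, k2, k3}")
      case True
      then show False
        using top v nn_integral_powr_majorant_finite[where v="v l" and c="a l" and \<mu>="\<mu> l"] by (auto simp: G_def)
    next
      case False
      then show False
        using top prob_space.emeasure_space_1[OF prob_space_normal_measure, of "\<mu> l" "v l"]
        by (simp add: G_def)
    qed
  qed
  finally show ?thesis
    by (subst integrable_iff_bounded) (auto simp: top.not_eq_extremum)
qed

section \<open>Risk of the shrinkage estimator\<close>

definition diag_sq_norm :: "nat \<Rightarrow> (nat \<Rightarrow> real) \<Rightarrow> (nat \<Rightarrow> real) \<Rightarrow> real" where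
  "diag_sq_norm p a x = (\<Sum>l<p. (a l * x l)\<^sup>2)"

lemma diag_sq_norm_nonneg: "0 \<le> diag_sq_norm p a x"
  by (simp add: diag_sq_norm_def sum_nonneg)

lemma coordinate_sq_le_diag_sq_norm: "j < p \<Longrightarrow> (a j * x j)\<^sup>2 \<le> diag_sq_norm p a x"
  unfolding diag_sq_norm_def by (rule member_le_sum) auto

lemma borel_measurable_diag_sq_norm [measurable]:
  "diag_sq_norm p a \<in> borel_measurable (Pi\<^sub>M {..<p} (\<lambda>_. borel))"
  unfolding diag_sq_norm_def[abs_def] by measurable

lemma measurable_gauss_vec_component [measurable]:
  "j < p \<Longrightarrow> (\<lambda>x. x j) \<in> borel_measurable (gauss_vec p \<theta> d)"
  by (subst measurable_cong_sets[OF sets_gauss_vec refl]) (rule measurable_component_singleton, simp)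

lemma shrink_est_sq_error:
  fixes p :: nat and d a x \<theta> :: "nat \<Rightarrow> real"
  defines "Q \<equiv> diag_sq_norm p a x" and "c \<equiv> cstar p d a"
  shows "(\<Sum>j<p. (shrink_est p d a x j - \<theta> j)\<^sup>2)
    = (\<Sum>j<p. (x j - \<theta> j)\<^sup>2) - 2 * c * (\<Sum>j<p. (x j - \<theta> j) * (a j * x j / Q)) + c\<^sup>2 * (1 / Q)"
proof -
  have "(\<Sum>j<p. (a j * x j / Q)\<^sup>2) = Q / Q\<^sup>2"
    by (simp add: Q_def diag_sq_norm_def power_divide sum_divide_distrib)
  then have sq: "(\<Sum>j<p. (a j * x j / Q)\<^sup>2) = 1 / Q" by (simp add: power2_eq_square)
  have est: "shrink_est p d a x j = x j - c * (a j * x j / Q)" for j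
    by (simp add: shrink_est_def c_def Q_def diag_sq_norm_def)
  have "(u - c * w - t)\<^sup>2 = (u - t)\<^sup>2 - 2 * c * ((u - t) * w) + c\<^sup>2 * w\<^sup>2" for u w t :: real
    by (simp add: power2_eq_square algebra_simps)
  then have "(shrink_est p d a x j - \<theta> j)\<^sup>2
      = (x j - \<theta> j)\<^sup>2 - 2 * c * ((x j - \<theta> j) * (a j * x j / Q)) + c\<^sup>2 * (a j * x j / Q)\<^sup>2" for j
    by (simp only: est)
  then have "(\<Sum>j<p. (shrink_est p d a x j - \<theta> j)\<^sup>2)
      = (\<Sum>j<p. (x j - \<theta> j)\<^sup>2) - (\<Sum>j<p. 2 * c * ((x j - \<theta> j) * (a j * x j / Q)))
        + (\<Sum>j<p. c\<^sup>2 * (a j * x j / Q)\<^sup>2)"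
    by (simp only: sum.distrib sum_subtractf)
  also have "\<dots> = (\<Sum>j<p. (x j - \<theta> j)\<^sup>2) - 2 * c * (\<Sum>j<p. (x j - \<theta> j) * (a j * x j / Q))
        + c\<^sup>2 * (\<Sum>j<p. (a j * x j / Q)\<^sup>2)"
    by (simp only: sum_distrib_left)
  finally show ?thesis unfolding sq .
qed

text \<open>The right-hand side is the divergence of x \<mapsto> D A x / Q(x); it dominates c*(D,A) / Q(x)
  because \<Sum>j d_j a_j (a_j x_j)^2 \<le> (max_j d_j a_j) Q(x).\<close>

lemma cstar_div_le_divergence:
  fixes p :: nat and d a x :: "nat \<Rightarrow> real"
  defines "Q \<equiv> diag_sq_norm p a x"
  shows "cstar p d a * (1 / Q) \<le> (\<Sum>j<p. d j * (a j / Q - 2 * a j ^ 3 * (x j)\<^sup>2 / Q\<^sup>2))"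
proof (cases "Q = 0")
  case True
  then show ?thesis by simp
next
  case False
  then have Q: "Q > 0" using diag_sq_norm_nonneg[of p a x] by (simp add: Q_def)
  define Mx where "Mx = Max ((\<lambda>j. d j * a j) ` {..<p})"
  have e: "d j * (a j / Q - 2 * a j ^ 3 * (x j)\<^sup>2 / Q\<^sup>2)
      = (d j * a j) / Q - 2 * ((d j * a j) * (a j * x j)\<^sup>2) / Q\<^sup>2" for j
    by (simp add: power2_eq_square power3_eq_cube field_simps)
  have "(\<Sum>j<p. (d j * a j) * (a j * x j)\<^sup>2) \<le> (\<Sum>j<p. Mx * (a j * x j)\<^sup>2)"
    unfolding Mx_def by (intro sum_mono mult_right_mono Max_ge) auto
  also have "\<dots> = Mx * Q" by (simp add: Q_def diag_sq_norm_def sum_distrib_left)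
  finally have s: "(\<Sum>j<p. (d j * a j) * (a j * x j)\<^sup>2) \<le> Mx * Q" .
  have "cstar p d a * (1 / Q) = (\<Sum>j<p. d j * a j) / Q - 2 * (Mx * Q) / Q\<^sup>2"
    using Q by (simp add: cstar_def Mx_def power2_eq_square field_simps)
  also have "\<dots> \<le> (\<Sum>j<p. d j * a j) / Q - 2 * (\<Sum>j<p. (d j * a j) * (a j * x j)\<^sup>2) / Q\<^sup>2"
    using s Q by (intro diff_left_mono divide_right_mono) auto
  also have "\<dots> = (\<Sum>j<p. d j * (a j / Q - 2 * a j ^ 3 * (x j)\<^sup>2 / Q\<^sup>2))"
    unfolding e by (simp add: sum_subtractf sum_divide_distrib[symmetric] sum_distrib_left)
  finally show ?thesis .
qed

lemma abs_mult_ratio_le: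
  fixes y a t q :: real
  assumes "(a * t)\<^sup>2 \<le> q"
  shows "\<bar>y * (a * t / q)\<bar> \<le> y\<^sup>2 + 1 / q"
proof -
  have "(a * t / q)\<^sup>2 \<le> 1 / q"
  proof (cases "q = 0")
    case False
    then have "q > 0" using assms by (metis order.not_eq_order_implies_strict zero_le_power2 order_trans)
    then have "(a * t)\<^sup>2 / q\<^sup>2 \<le> q / q\<^sup>2" using assms by (intro divide_right_mono) auto
    then show ?thesis using \<open>q > 0\<close> by (simp add: power_divide power2_eq_square)
  qed simp
  moreover have "\<bar>y * z\<bar> \<le> y\<^sup>2 + z\<^sup>2" for z :: real
  proof -
    have "0 \<le> (\<bar>y\<bar> - \<bar>z\<bar>)\<^sup>2" by simp
    then have "2 * (\<bar>y\<bar> * \<bar>z\<bar>) \<le> y\<^sup>2 + z\<^sup>2" by (simp add: power2_diff power2_abs mult.assoc)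
    then show ?thesis using abs_ge_zero[of "y * z"] by (simp only: abs_mult)
  qed
  ultimately show ?thesis by (meson add_left_mono order_trans)
qed

lemma inverse_ge_tangent:
  fixes q m :: real
  assumes "0 < q" "0 < m"
  shows "2 / m - q / m\<^sup>2 \<le> 1 / q"
proof -
  have "1 / q - (2 / m - q / m\<^sup>2) = (m - q)\<^sup>2 / (q * m\<^sup>2)"
    using assms by (simp add: field_simps power2_eq_square)
  also have "\<dots> \<ge> 0" using assms by simp
  finally show ?thesis by simp
qed

context
  fixes p :: nat and d a :: "nat \<Rightarrow> real" and k1 k2 k3 :: nat
  assumes d_pos: "\<forall>j<p. d j > 0"
    and k: "k1 < p" "k2 < p" "k3 < p" "k1 \<noteq> k2" "k1 \<noteq> k3" "k2 \<noteq> k3"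
    and a_k: "a k1 \<noteq> 0" "a k2 \<noteq> 0" "a k3 \<noteq> 0"
begin

lemma integrable_inverse_diag_sq_norm:
  "integrable (gauss_vec p \<theta> d) (\<lambda>x. 1 / diag_sq_norm p a x)"
  unfolding gauss_vec_def diag_sq_norm_def
  by (rule integrable_inverse_sum_squares[of "{..<p}" k1 k2 k3]) (use k a_k d_pos in auto)

lemma integrable_stein_cross_term:
  assumes j: "j < p"
  shows "integrable (gauss_vec p \<theta> d) (\<lambda>x. (x j - \<theta> j) * (a j * x j / diag_sq_norm p a x))"
proof (rule Bochner_Integration.integrable_bound[where f="\<lambda>x. (x j - \<theta> j)\<^sup>2 + 1 / diag_sq_norm p a x"])
  show "integrable (gauss_vec p \<theta> d) (\<lambda>x. (x j - \<theta> j)\<^sup>2 + 1 / diag_sq_norm p a x)"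
    using has_bochner_integral_gauss_vec_component[OF j normal_measure_variance] d_pos j
      integrable_inverse_diag_sq_norm
    by (auto simp: has_bochner_integral_iff less_imp_le)
  show "AE x in gauss_vec p \<theta> d. norm ((x j - \<theta> j) * (a j * x j / diag_sq_norm p a x))
      \<le> norm ((x j - \<theta> j)\<^sup>2 + 1 / diag_sq_norm p a x)"
    using abs_mult_ratio_le[OF coordinate_sq_le_diag_sq_norm[OF j]] diag_sq_norm_nonneg
    by (intro AE_I2) (simp add: order_trans[OF _ abs_ge_self])
qed (use j in measurable)

lemma integrable_stein_divergence_term:
  assumes j: "j < p"
  shows "integrable (gauss_vec p \<theta> d)
    (\<lambda>x. a j / diag_sq_norm p a x - 2 * a j ^ 3 * (x j)\<^sup>2 / (diag_sq_norm p a x)\<^sup>2)"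
proof (rule Bochner_Integration.integrable_bound[where f="\<lambda>x. 3 * \<bar>a j\<bar> * (1 / diag_sq_norm p a x)"])
  show "integrable (gauss_vec p \<theta> d) (\<lambda>x. 3 * \<bar>a j\<bar> * (1 / diag_sq_norm p a x))"
    using integrable_mult_right[OF integrable_inverse_diag_sq_norm[of \<theta>], of "3 * \<bar>a j\<bar>"] by simp
  show "AE x in gauss_vec p \<theta> d.
      norm (a j / diag_sq_norm p a x - 2 * a j ^ 3 * (x j)\<^sup>2 / (diag_sq_norm p a x)\<^sup>2)
      \<le> norm (3 * \<bar>a j\<bar> * (1 / diag_sq_norm p a x))"
  proof (rule AE_I2)
    fix x
    show "norm (a j / diag_sq_norm p a x - 2 * a j ^ 3 * (x j)\<^sup>2 / (diag_sq_norm p a x)\<^sup>2)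
        \<le> norm (3 * \<bar>a j\<bar> * (1 / diag_sq_norm p a x))"
      using abs_ratio_derivative_le[OF coordinate_sq_le_diag_sq_norm[OF j, where a=a and x=x]]
        diag_sq_norm_nonneg[of p a x]
      by (cases "diag_sq_norm p a x = 0") auto
  qed
qed (use j in measurable)

lemma stein_cross_term:
  assumes j: "j < p"
  shows "(\<integral>x. (x j - \<theta> j) * (a j * x j / diag_sq_norm p a x) \<partial>gauss_vec p \<theta> d)
    = d j * (\<integral>x. a j / diag_sq_norm p a x - 2 * a j ^ 3 * (x j)\<^sup>2 / (diag_sq_norm p a x)\<^sup>2
        \<partial>gauss_vec p \<theta> d)"
proof (cases "a j = 0")
  case True
  then show ?thesis by simp
next
  case False
  obtain l where l: "l < p" "l \<noteq> j" "a l \<noteq> 0" using k a_k by metis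
  show ?thesis
    using stein_identity_PiM[of "{..<p}" j d l a \<theta>] integrable_stein_cross_term[OF j]
      integrable_stein_divergence_term[OF j] j l d_pos
    by (simp add: gauss_vec_def diag_sq_norm_def[abs_def])
qed

lemma cstar_mult_integral_inverse_le:
  "cstar p d a * (\<integral>x. 1 / diag_sq_norm p a x \<partial>gauss_vec p \<theta> d)
    \<le> (\<Sum>j<p. \<integral>x. (x j - \<theta> j) * (a j * x j / diag_sq_norm p a x) \<partial>gauss_vec p \<theta> d)"
proof -
  have "cstar p d a * (\<integral>x. 1 / diag_sq_norm p a x \<partial>gauss_vec p \<theta> d)
      = (\<integral>x. cstar p d a * (1 / diag_sq_norm p a x) \<partial>gauss_vec p \<theta> d)"
    by (rule integral_mult_right_zero[symmetric])
  also have "\<dots> \<le> (\<integral>x. (\<Sum>j<p. d j * (a j / diag_sq_norm p a x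
      - 2 * a j ^ 3 * (x j)\<^sup>2 / (diag_sq_norm p a x)\<^sup>2)) \<partial>gauss_vec p \<theta> d)"
    by (intro Bochner_Integration.integral_mono cstar_div_le_divergence integrable_mult_right
        integrable_inverse_diag_sq_norm Bochner_Integration.integrable_sum
        integrable_stein_divergence_term) auto
  also have "\<dots> = (\<Sum>j<p. d j * (\<integral>x. a j / diag_sq_norm p a x
      - 2 * a j ^ 3 * (x j)\<^sup>2 / (diag_sq_norm p a x)\<^sup>2 \<partial>gauss_vec p \<theta> d))"
    by (subst Bochner_Integration.integral_sum) (auto intro: integrable_stein_divergence_term)
  also have "\<dots> = (\<Sum>j<p. \<integral>x. (x j - \<theta> j) * (a j * x j / diag_sq_norm p a x) \<partial>gauss_vec p \<theta> d)"
    by (intro sum.cong refl stein_cross_term[symmetric]) auto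
  finally show ?thesis .
qed

lemma risk_shrink_est_eq:
  fixes \<theta> :: "nat \<Rightarrow> real"
  defines "c \<equiv> cstar p d a"
    and "S \<equiv> (\<Sum>j<p. \<integral>x. (x j - \<theta> j) * (a j * x j / diag_sq_norm p a x) \<partial>gauss_vec p \<theta> d)"
    and "IQ \<equiv> (\<integral>x. 1 / diag_sq_norm p a x \<partial>gauss_vec p \<theta> d)"
  shows "risk p d (shrink_est p d a) \<theta> = ennreal ((\<Sum>j<p. d j) - 2 * c * S + c\<^sup>2 * IQ)"
    and "0 \<le> (\<Sum>j<p. d j) - 2 * c * S + c\<^sup>2 * IQ"
proof -
  have hb: "has_bochner_integral (gauss_vec p \<theta> d) (\<lambda>x. \<Sum>j<p. (shrink_est p d a x j - \<theta> j)\<^sup>2)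
      ((\<Sum>j<p. d j) - 2 * c * S + c\<^sup>2 * IQ)"
    unfolding shrink_est_sq_error S_def IQ_def c_def
    using d_pos
    by (intro has_bochner_integral_add has_bochner_integral_diff has_bochner_integral_sum
        has_bochner_integral_mult_right has_bochner_integral_integrable
        has_bochner_integral_gauss_vec_component normal_measure_variance
        integrable_stein_cross_term integrable_inverse_diag_sq_norm) auto
  then show "risk p d (shrink_est p d a) \<theta> = ennreal ((\<Sum>j<p. d j) - 2 * c * S + c\<^sup>2 * IQ)"
    unfolding risk_def by (rule nn_integral_eq_has_bochner_integral) (simp add: sum_nonneg)
  show "0 \<le> (\<Sum>j<p. d j) - 2 * c * S + c\<^sup>2 * IQ"
    using has_bochner_integral_integral_eq[OF hb]
      Bochner_Integration.integral_nonneg[of "gauss_vec p \<theta> d" "\<lambda>x. \<Sum>j<p. (shrink_est p d a x j - \<theta> j)\<^sup>2"]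
    by (simp add: sum_nonneg)
qed

lemma integral_inverse_diag_sq_norm_ge:
  fixes \<theta> :: "nat \<Rightarrow> real"
  assumes m: "m > 0"
  shows "2 / m - (\<Sum>j<p. (a j)\<^sup>2 * (d j + (\<theta> j)\<^sup>2)) / m\<^sup>2
    \<le> (\<integral>x. 1 / diag_sq_norm p a x \<partial>gauss_vec p \<theta> d)"
proof -
  interpret prob_space "gauss_vec p \<theta> d" by (rule prob_space_gauss_vec)
  have hQ: "has_bochner_integral (gauss_vec p \<theta> d) (diag_sq_norm p a) (\<Sum>j<p. (a j)\<^sup>2 * (d j + (\<theta> j)\<^sup>2))"
    unfolding diag_sq_norm_def[abs_def] power_mult_distrib
    using d_pos by (intro has_bochner_integral_sum has_bochner_integral_mult_right
        has_bochner_integral_gauss_vec_component normal_measure_second_moment) auto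
  have "AE x in gauss_vec p \<theta> d. x k1 \<noteq> 0"
    unfolding gauss_vec_def by (rule AE_PiM_normal_component_neq) (use k d_pos in auto)
  then have "AE x in gauss_vec p \<theta> d. 2 / m - diag_sq_norm p a x / m\<^sup>2 \<le> 1 / diag_sq_norm p a x"
  proof eventually_elim
    case (elim x)
    have "0 < (a k1 * x k1)\<^sup>2" using elim a_k by simp
    also have "\<dots> \<le> diag_sq_norm p a x" by (rule coordinate_sq_le_diag_sq_norm) (use k in auto)
    finally show ?case using m by (rule inverse_ge_tangent)
  qed
  then have "(\<integral>x. 2 / m - diag_sq_norm p a x / m\<^sup>2 \<partial>gauss_vec p \<theta> d)
      \<le> (\<integral>x. 1 / diag_sq_norm p a x \<partial>gauss_vec p \<theta> d)"
    using hQ by (intro integral_mono_AE integrable_inverse_diag_sq_norm)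
      (auto simp: has_bochner_integral_iff)
  then show ?thesis using hQ by (simp add: has_bochner_integral_iff prob_space)
qed

lemma risk_shrink_est_le:
  fixes \<theta> :: "nat \<Rightarrow> real"
  assumes c: "cstar p d a \<ge> 0" and m: "m > 0"
  defines "B \<equiv> (\<Sum>j<p. d j) - (cstar p d a)\<^sup>2 * (2 / m - (\<Sum>j<p. (a j)\<^sup>2 * (d j + (\<theta> j)\<^sup>2)) / m\<^sup>2)"
  shows "risk p d (shrink_est p d a) \<theta> \<le> ennreal B" and "0 \<le> B"
proof -
  define S where "S = (\<Sum>j<p. \<integral>x. (x j - \<theta> j) * (a j * x j / diag_sq_norm p a x) \<partial>gauss_vec p \<theta> d)"
  define IQ where "IQ = (\<integral>x. 1 / diag_sq_norm p a x \<partial>gauss_vec p \<theta> d)"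
  have "2 * cstar p d a * (cstar p d a * IQ) \<le> 2 * cstar p d a * S"
    using cstar_mult_integral_inverse_le c by (intro mult_left_mono) (auto simp: S_def IQ_def)
  then have "(\<Sum>j<p. d j) - 2 * cstar p d a * S + (cstar p d a)\<^sup>2 * IQ
      \<le> (\<Sum>j<p. d j) - (cstar p d a)\<^sup>2 * IQ"
    by (simp add: power2_eq_square algebra_simps)
  also have "\<dots> \<le> B"
    unfolding B_def IQ_def using integral_inverse_diag_sq_norm_ge[OF m]
    by (intro diff_left_mono mult_left_mono) auto
  finally have le: "(\<Sum>j<p. d j) - 2 * cstar p d a * S + (cstar p d a)\<^sup>2 * IQ \<le> B" .
  then show "risk p d (shrink_est p d a) \<theta> \<le> ennreal B"
    unfolding risk_shrink_est_eq(1) S_def[symmetric] IQ_def[symmetric] by (rule ennreal_leI)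
  show "0 \<le> B"
    using le risk_shrink_est_eq(2)[of \<theta>] unfolding S_def[symmetric] IQ_def[symmetric] by linarith
qed

lemma max_risk_shrink_est_le:
  assumes c: "cstar p d a \<ge> 0"
    and m: "(\<Sum>j<p. (a j)\<^sup>2 * (d j + lam j)) = m" "m > 0"
  shows "max_risk p d (shrink_est p d a) lam \<le> ennreal ((\<Sum>j<p. d j) - (cstar p d a)\<^sup>2 / m)"
  unfolding max_risk_def
proof (rule SUP_least)
  fix \<theta> assume "\<theta> \<in> hyperrect p lam"
  then have "(\<Sum>j<p. (a j)\<^sup>2 * (d j + (\<theta> j)\<^sup>2)) / m\<^sup>2 \<le> m / m\<^sup>2"
    unfolding m(1)[symmetric]
    by (intro divide_right_mono sum_mono mult_left_mono add_left_mono) (auto simp: hyperrect_def)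
  then have "1 / m \<le> 2 / m - (\<Sum>j<p. (a j)\<^sup>2 * (d j + (\<theta> j)\<^sup>2)) / m\<^sup>2"
    using m(2) by (simp add: power2_eq_square)
  then have "(\<Sum>j<p. d j) - (cstar p d a)\<^sup>2 * (2 / m - (\<Sum>j<p. (a j)\<^sup>2 * (d j + (\<theta> j)\<^sup>2)) / m\<^sup>2)
      \<le> (\<Sum>j<p. d j) - (cstar p d a)\<^sup>2 / m"
    using mult_left_mono[of "1 / m" _ "(cstar p d a)\<^sup>2"] by simp
  then show "risk p d (shrink_est p d a) \<theta> \<le> ennreal ((\<Sum>j<p. d j) - (cstar p d a)\<^sup>2 / m)"
    using risk_shrink_est_le(1)[OF c m(2), of \<theta>] by (meson ennreal_leI order_trans)
qed

text \<open>The pointwise risk bound is affine in the \<open>\<theta>\<^sub>j\<^sup>2\<close>, so under the prior it integrates exactly,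
  with \<open>E \<theta>\<^sub>j\<^sup>2 = \<lambda>\<^sub>j\<close>.\<close>

lemma bayes_risk_shrink_est_le:
  assumes c: "cstar p d a \<ge> 0" and lam: "\<forall>j<p. lam j \<ge> 0"
    and m: "(\<Sum>j<p. (a j)\<^sup>2 * (d j + lam j)) = m" "m > 0"
  shows "bayes_risk p d (shrink_est p d a) lam \<le> ennreal ((\<Sum>j<p. d j) - (cstar p d a)\<^sup>2 / m)"
proof -
  define c where "c = cstar p d a"
  define G where "G \<theta> = (\<Sum>j<p. d j) - c\<^sup>2 * (2 / m - (\<Sum>j<p. (a j)\<^sup>2 * (d j + (\<theta> j)\<^sup>2)) / m\<^sup>2)"
    for \<theta> :: "nat \<Rightarrow> real"
  have sq: "has_bochner_integral (gauss_vec p (\<lambda>_. 0) lam) (\<lambda>\<theta>. (\<theta> j)\<^sup>2) (lam j)" if "j < p" for j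
    using normal_measure_second_moment[of "lam j" 0] lam that
    by (intro has_bochner_integral_gauss_vec_component) auto
  have "has_bochner_integral (gauss_vec p (\<lambda>_. 0) lam)
      (\<lambda>\<theta>. (\<Sum>j<p. d j) - c\<^sup>2 * (2 / m) + (c\<^sup>2 / m\<^sup>2) * (\<Sum>j<p. (a j)\<^sup>2 * (d j + (\<theta> j)\<^sup>2)))
      ((\<Sum>j<p. d j) - c\<^sup>2 * (2 / m) + (c\<^sup>2 / m\<^sup>2) * (\<Sum>j<p. (a j)\<^sup>2 * (d j + lam j)))"
    by (intro has_bochner_integral_add has_bochner_integral_diff has_bochner_integral_mult_right
        has_bochner_integral_const_prob[OF prob_space_gauss_vec] has_bochner_integral_sum sq) auto
  moreover have "(\<lambda>\<theta>. (\<Sum>j<p. d j) - c\<^sup>2 * (2 / m) + (c\<^sup>2 / m\<^sup>2) * (\<Sum>j<p. (a j)\<^sup>2 * (d j + (\<theta> j)\<^sup>2))) = G"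
    by (auto simp: G_def fun_eq_iff field_simps)
  moreover have "(\<Sum>j<p. d j) - c\<^sup>2 * (2 / m) + (c\<^sup>2 / m\<^sup>2) * (\<Sum>j<p. (a j)\<^sup>2 * (d j + lam j))
      = (\<Sum>j<p. d j) - c\<^sup>2 / m"
    unfolding m(1) using m(2) by (simp add: power2_eq_square field_simps)
  ultimately have hG: "has_bochner_integral (gauss_vec p (\<lambda>_. 0) lam) G ((\<Sum>j<p. d j) - c\<^sup>2 / m)"
    by (simp only:)
  have "bayes_risk p d (shrink_est p d a) lam \<le> (\<integral>\<^sup>+ \<theta>. ennreal (G \<theta>) \<partial>gauss_vec p (\<lambda>_. 0) lam)"
    unfolding bayes_risk_def G_def c_def using risk_shrink_est_le(1)[OF c m(2)]
    by (intro nn_integral_mono) simp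
  also have "\<dots> = ennreal ((\<Sum>j<p. d j) - c\<^sup>2 / m)"
    by (rule nn_integral_eq_has_bochner_integral[OF hG])
      (use risk_shrink_est_le(2)[OF c m(2)] in \<open>simp add: G_def c_def\<close>)
  finally show ?thesis by (simp add: c_def)
qed

end

section \<open>The optimal weights \<open>A\<^sup>\<dagger>\<close>\<close>

lemma dstar_pos: "d j > 0 \<Longrightarrow> \<gamma> j \<ge> 0 \<Longrightarrow> dstar d \<gamma> j > 0"
  by (simp add: dstar_def add_pos_nonneg)

lemma feasibleA_scaled_competitor:
  fixes d \<gamma> u :: "nat \<Rightarrow> real"
  assumes d: "\<forall>j<p. d j > 0" and g: "\<forall>j<p. \<gamma> j \<ge> 0"
    and u: "\<forall>j<p. 0 \<le> u j" "\<forall>j<p. u j \<le> m0" "j0 < p" "u j0 = m0"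
    and D: "0 < (\<Sum>j<p. (u j)\<^sup>2 / dstar d \<gamma> j)"
  defines "s \<equiv> sqrt ((\<Sum>j<p. dstar d \<gamma> j) / (\<Sum>j<p. (u j)\<^sup>2 / dstar d \<gamma> j))"
  shows "feasibleA p d \<gamma> (\<lambda>j. s * u j / d j)"
    and "cstar p d (\<lambda>j. s * u j / d j) = s * ((\<Sum>j<p. u j) - 2 * m0)"
    and "s\<^sup>2 = (\<Sum>j<p. dstar d \<gamma> j) / (\<Sum>j<p. (u j)\<^sup>2 / dstar d \<gamma> j)"
proof -
  have T: "0 \<le> (\<Sum>j<p. dstar d \<gamma> j)"
    using d g by (intro sum_nonneg) (auto intro: less_imp_le dstar_pos)
  have s0: "s \<ge> 0" unfolding s_def using D T by simp
  show s2: "s\<^sup>2 = (\<Sum>j<p. dstar d \<gamma> j) / (\<Sum>j<p. (u j)\<^sup>2 / dstar d \<gamma> j)"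
    unfolding s_def using D T by simp
  have "(d j + \<gamma> j) * (s * u j / d j)\<^sup>2 = s\<^sup>2 * ((u j)\<^sup>2 / dstar d \<gamma> j)" if "j < p" for j
    using d g that by (simp add: dstar_def field_simps power2_eq_square add_pos_nonneg)
  then have "(\<Sum>j<p. (d j + \<gamma> j) * (s * u j / d j)\<^sup>2) = s\<^sup>2 * (\<Sum>j<p. (u j)\<^sup>2 / dstar d \<gamma> j)"
    by (simp add: sum_distrib_left)
  also have "\<dots> = (\<Sum>j<p. dstar d \<gamma> j)" using s2 D by simp
  finally show "feasibleA p d \<gamma> (\<lambda>j. s * u j / d j)"
    unfolding feasibleA_def using s0 u d by (auto intro!: divide_nonneg_pos mult_nonneg_nonneg)
  have du: "d j * (s * u j / d j) = s * u j" if "j < p" for j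
  proof -
    have "d j \<noteq> 0" using d that by auto
    then show ?thesis by simp
  qed
  have "(\<Sum>j<p. d j * (s * u j / d j)) = s * (\<Sum>j<p. u j)"
    unfolding sum_distrib_left by (rule sum.cong) (use du in auto)
  moreover have "Max ((\<lambda>j. d j * (s * u j / d j)) ` {..<p}) = s * m0"
  proof (rule Max_eqI)
    show "y \<le> s * m0" if "y \<in> (\<lambda>j. d j * (s * u j / d j)) ` {..<p}" for y
      using that du u s0 by (auto intro: mult_left_mono)
    show "s * m0 \<in> (\<lambda>j. d j * (s * u j / d j)) ` {..<p}"
      using u du by (auto intro!: image_eqI[of _ _ j0])
  qed simp
  ultimately show "cstar p d (\<lambda>j. s * u j / d j) = s * ((\<Sum>j<p. u j) - 2 * m0)"
    unfolding cstar_def by (simp add: algebra_simps)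
qed

lemma sum_dstar_pos:
  assumes "p > 0" "\<forall>j<p. d j > 0" "\<forall>j<p. \<gamma> j \<ge> 0"
  shows "0 < (\<Sum>j<p. dstar d \<gamma> j)"
  using assms by (intro sum_pos) (auto intro: dstar_pos simp: lessThan_empty_iff)

lemma competitor_sq_ge:
  fixes T R D s m0 :: real
  assumes s: "s\<^sup>2 = T / D" and D: "D > 0" "T > 0" "D \<le> 4 * m0 + R" and R: "R \<ge> 0" "m0 \<ge> 0"
  shows "T * R \<le> (s * (2 * m0 + R))\<^sup>2"
proof -
  have "R * D \<le> R * (4 * m0 + R)" using D R by (intro mult_left_mono) auto
  also have "\<dots> \<le> (2 * m0 + R)\<^sup>2" using R by (simp add: power2_eq_square algebra_simps)
  finally have "T * R \<le> T / D * (2 * m0 + R)\<^sup>2" using D by (simp add: field_simps)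
  then show ?thesis using s by (simp add: power_mult_distrib)
qed

context
  fixes p :: nat and d \<gamma> a :: "nat \<Rightarrow> real"
  assumes p3: "p \<ge> 3" and d_pos: "\<forall>j<p. d j > 0" and g_nonneg: "\<forall>j<p. \<gamma> j \<ge> 0"
    and a_max: "\<forall>b. feasibleA p d \<gamma> b \<longrightarrow> cstar p d b \<le> cstar p d a"
begin

text \<open>The constant profile \<open>u = 1\<close> already gives \<open>c\<^sup>* = s (p - 2) > 0\<close>.\<close>

lemma cstar_maximiser_pos: "cstar p d a > 0"
proof -
  define D where "D = (\<Sum>j<p. (1::real)\<^sup>2 / dstar d \<gamma> j)"
  have D: "D > 0"
    unfolding D_def using p3 d_pos g_nonneg by (intro sum_pos) (auto intro: dstar_pos simp: lessThan_empty_iff)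
  define s where "s = sqrt ((\<Sum>j<p. dstar d \<gamma> j) / D)"
  note F = feasibleA_scaled_competitor[OF d_pos g_nonneg, of "\<lambda>_. 1" 1 0, folded D_def s_def]
  have s: "s > 0" unfolding s_def using D sum_dstar_pos[OF _ d_pos g_nonneg] p3 by simp
  have "0 < s * (real p - 2)" using s p3 by simp
  also have "\<dots> = cstar p d (\<lambda>j. s * 1 / d j)" using F(2) p3 D by simp
  also have "\<dots> \<le> cstar p d a" using a_max F(1) p3 D by simp
  finally show ?thesis .
qed

text \<open>For \<open>p \<ge> 5\<close> compare with the profile \<open>u\<^sub>j = min(d\<^sub>j\<^sup>*, d\<^sub>5\<^sup>*)\<close>, which is flat on the four largest
  \<open>d\<^sub>j\<^sup>*\<close> and equal to \<open>d\<^sub>j\<^sup>*\<close> on the rest.\<close>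

lemma cstar_maximiser_sq_ge_tail:
  assumes p5: "p \<ge> 5" and sorted: "\<forall>i j. i \<le> j \<and> j < p \<longrightarrow> dstar d \<gamma> j \<le> dstar d \<gamma> i"
  shows "(\<Sum>j<p. dstar d \<gamma> j) * (\<Sum>j\<in>{4..<p}. dstar d \<gamma> j) \<le> (cstar p d a)\<^sup>2"
proof -
  define w where "w j = dstar d \<gamma> j" for j
  define T where "T = (\<Sum>j<p. w j)"
  define R where "R = (\<Sum>j\<in>{4..<p}. w j)"
  define m0 where "m0 = w 4"
  define u where "u j = min (w j) m0" for j
  have w: "w j > 0" if "j < p" for j using d_pos g_nonneg that by (auto simp: w_def intro: dstar_pos)
  have m0: "m0 > 0" using w p5 by (simp add: m0_def)
  have R: "R \<ge> 0" unfolding R_def using w by (intro sum_nonneg) (auto intro: less_imp_le)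
  have u: "\<forall>j<p. 0 \<le> u j" "\<forall>j<p. u j \<le> m0" "u 4 = m0"
    using w m0 by (auto simp: u_def m0_def less_imp_le)
  have split: "(\<Sum>j<p. f j) = (\<Sum>j<4. f j) + (\<Sum>j\<in>{4..<p}. f j)" for f :: "nat \<Rightarrow> real"
    using sum.atLeastLessThan_concat[of 0 4 p f] p5 by (simp add: atLeast0LessThan)
  have "u j = m0" if "j < 4" for j
    using sorted[rule_format, of j 4] that p5 by (auto simp: u_def m0_def w_def)
  then have "(\<Sum>j<4. u j) = 4 * m0" by simp
  moreover have "(\<Sum>j\<in>{4..<p}. u j) = R"
    unfolding R_def using sorted by (intro sum.cong) (auto simp: u_def m0_def w_def)
  ultimately have sum_u: "(\<Sum>j<p. u j) = 4 * m0 + R" by (simp add: split)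
  define D where "D = (\<Sum>j<p. (u j)\<^sup>2 / dstar d \<gamma> j)"
  have D_le: "D \<le> (\<Sum>j<p. u j)"
    unfolding D_def using w u
    by (intro sum_mono) (auto simp: u_def w_def power2_eq_square divide_le_eq intro: mult_mono)
  have D: "D > 0"
  proof -
    have "0 < (u 4)\<^sup>2 / dstar d \<gamma> 4" using u m0 w[of 4] p5 by (simp add: w_def)
    also have "\<dots> \<le> D" unfolding D_def
      using p5 w by (intro member_le_sum) (auto simp: w_def less_imp_le)
    finally show ?thesis .
  qed
  define s where "s = sqrt ((\<Sum>j<p. dstar d \<gamma> j) / D)"
  note F = feasibleA_scaled_competitor[OF d_pos g_nonneg u(1,2) _ u(3), folded D_def s_def]
  have T: "T > 0" using sum_dstar_pos[OF _ d_pos g_nonneg] p3 by (simp add: T_def w_def)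
  have s2: "s\<^sup>2 = T / D" and s: "s > 0"
    using F(3) p5 D T by (simp_all add: s_def T_def w_def)
  have "s * (2 * m0 + R) = cstar p d (\<lambda>j. s * u j / d j)"
    using F(2) p5 D sum_u by (simp add: algebra_simps)
  also have "\<dots> \<le> cstar p d a" using a_max F(1) p5 D by simp
  finally have cs: "s * (2 * m0 + R) \<le> cstar p d a" .
  have "T * R \<le> (s * (2 * m0 + R))\<^sup>2"
    using competitor_sq_ge[OF s2 D T D_le[unfolded sum_u] R less_imp_le[OF m0]] .
  also have "\<dots> \<le> (cstar p d a)\<^sup>2"
    by (rule power_mono[OF cs]) (use s m0 R in simp)
  finally have "T * R \<le> (cstar p d a)\<^sup>2" .
  then show ?thesis by (simp add: T_def R_def w_def)
qed

lemma cstar_maximiser_sq_ge: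
  assumes sorted: "\<forall>i j. i \<le> j \<and> j < p \<longrightarrow> dstar d \<gamma> j \<le> dstar d \<gamma> i"
  defines "S4 \<equiv> dstar d \<gamma> 0 + dstar d \<gamma> 1 + dstar d \<gamma> 2 + (if p \<ge> 4 then dstar d \<gamma> 3 else 0)"
  shows "(\<Sum>j<p. dstar d \<gamma> j) * ((\<Sum>j<p. dstar d \<gamma> j) - S4) \<le> (cstar p d a)\<^sup>2"
proof (cases "p \<ge> 5")
  case True
  have "(\<Sum>j<p. dstar d \<gamma> j) = S4 + (\<Sum>j\<in>{4..<p}. dstar d \<gamma> j)"
    using sum.atLeastLessThan_concat[of 0 4 p "dstar d \<gamma>"] True
    by (simp add: S4_def atLeast0LessThan numeral_eq_Suc)
  then show ?thesis using cstar_maximiser_sq_ge_tail[OF True sorted] by simp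
next
  case False
  then have "p = 3 \<or> p = 4" using p3 by auto
  then show ?thesis by (auto simp: S4_def eval_nat_numeral)
qed

end

lemma cstar_pos_imp_three_nonzero:
  fixes a d :: "nat \<Rightarrow> real"
  assumes d: "\<forall>j<p. d j > 0" and a: "\<forall>j<p. a j \<ge> 0" and c: "cstar p d a > 0" and p: "p > 0"
  obtains k1 k2 k3 where "k1 < p" "k2 < p" "k3 < p" "k1 \<noteq> k2" "k1 \<noteq> k3" "k2 \<noteq> k3"
    "a k1 \<noteq> 0" "a k2 \<noteq> 0" "a k3 \<noteq> 0"
proof -
  define Z where "Z = {j \<in> {..<p}. a j \<noteq> 0}"
  define Mx where "Mx = Max ((\<lambda>j. d j * a j) ` {..<p})"
  have Mx: "d j * a j \<le> Mx" if "j < p" for j unfolding Mx_def by (rule Max_ge) (use that in auto)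
  have "0 \<le> Mx" using Mx[of 0] p d a by (meson mult_nonneg_nonneg less_imp_le order_trans)
  \<comment> \<open>with at most two nonzero weights, \<open>\<Sum>\<^sub>j d\<^sub>j a\<^sub>j \<le> 2 max\<^sub>j d\<^sub>j a\<^sub>j\<close>\<close>
  have "3 \<le> card Z"
  proof (rule ccontr)
    assume "\<not> 3 \<le> card Z"
    then have "(\<Sum>j\<in>Z. Mx) \<le> 2 * Mx" using \<open>0 \<le> Mx\<close> by (simp add: mult_right_mono)
    moreover have "(\<Sum>j<p. d j * a j) = (\<Sum>j\<in>Z. d j * a j)"
      by (rule sum.mono_neutral_right) (auto simp: Z_def)
    moreover have "(\<Sum>j\<in>Z. d j * a j) \<le> (\<Sum>j\<in>Z. Mx)" by (rule sum_mono) (auto simp: Z_def Mx)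
    ultimately have "cstar p d a \<le> 0" by (simp add: cstar_def Mx_def)
    then show False using c by simp
  qed
  then obtain B where "B \<subseteq> Z" "card B = 3" by (meson obtain_subset_with_card_n)
  then obtain k1 k2 k3 where "B = {k1, k2, k3}" "k1 \<noteq> k2" "k2 \<noteq> k3" "k1 \<noteq> k3"
    by (auto simp: card_3_iff)
  then show thesis using that \<open>B \<subseteq> Z\<close> by (auto simp: Z_def)
qed

section \<open>The Bayes and minimax bounds for \<open>\<Gamma>\<^sub>\<alpha>\<close>\<close>

lemma Gamma_alpha_nonneg:
  fixes d \<gamma> :: "nat \<Rightarrow> real"
  assumes p: "p > 0" and d: "\<forall>j<p. d j > 0" and g: "\<forall>j<p. \<gamma> j \<ge> 0"
    and alpha: "\<alpha> \<ge> Max ((\<lambda>j. d j / (d j + \<gamma> j)) ` {..<p})"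
  shows "\<alpha> > 0" and "\<forall>j<p. \<alpha> * (d j + \<gamma> j) - d j \<ge> 0"
proof -
  have dg: "d j + \<gamma> j > 0" if "j < p" for j using d g that by (simp add: add_pos_nonneg)
  have le: "d j / (d j + \<gamma> j) \<le> \<alpha>" if "j < p" for j
  proof -
    have "d j / (d j + \<gamma> j) \<le> Max ((\<lambda>j. d j / (d j + \<gamma> j)) ` {..<p})"
      by (rule Max_ge) (use that in auto)
    then show ?thesis using alpha by linarith
  qed
  show "\<alpha> > 0" using le[of 0] d dg[of 0] p by (meson divide_pos_pos order_less_le_trans)
  show "\<forall>j<p. \<alpha> * (d j + \<gamma> j) - d j \<ge> 0" using le dg by (simp add: divide_le_eq)
qed

lemma sum_ratio_Gamma_alpha:
  fixes d \<gamma> :: "nat \<Rightarrow> real"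
  assumes \<alpha>: "\<alpha> > 0" and d: "\<forall>j<p. d j > 0" and g: "\<forall>j<p. \<gamma> j \<ge> 0"
  defines "lam \<equiv> \<lambda>j. \<alpha> * (d j + \<gamma> j) - d j"
  shows "(\<Sum>j<p. d j * lam j / (d j + lam j)) = (\<Sum>j<p. d j) - (\<Sum>j<p. dstar d \<gamma> j) / \<alpha>"
proof -
  have "d j * lam j / (d j + lam j) = d j - dstar d \<gamma> j / \<alpha>" if "j < p" for j
  proof -
    define q where "q = d j + \<gamma> j"
    have "q > 0" using d g that by (simp add: q_def add_pos_nonneg)
    then have "d j * (\<alpha> * q - d j) / (d j + (\<alpha> * q - d j)) = d j - (d j)\<^sup>2 / q / \<alpha>"
      using \<alpha> by (simp add: field_simps power2_eq_square)
    then show ?thesis by (simp add: lam_def dstar_def q_def)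
  qed
  then show ?thesis by (simp add: sum_subtractf sum_divide_distrib)
qed

lemma excess_risk_le:
  fixes D T S c \<alpha> :: real
  assumes \<alpha>: "\<alpha> > 0" and T: "T > 0" and c: "T * (T - S) \<le> c\<^sup>2"
    and nonneg: "0 \<le> D - T / \<alpha>" "0 \<le> S"
  shows "ennreal (D - c\<^sup>2 / (\<alpha> * T)) \<le> ennreal (D - T / \<alpha>) + ennreal (S / \<alpha>)"
proof -
  have "(T - S) / \<alpha> = T * (T - S) / (\<alpha> * T)" using T by simp
  also have "\<dots> \<le> c\<^sup>2 / (\<alpha> * T)" using c \<alpha> T by (intro divide_right_mono) auto
  finally have "D - c\<^sup>2 / (\<alpha> * T) \<le> (D - T / \<alpha>) + S / \<alpha>" by (simp add: diff_divide_distrib)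
  then show ?thesis
    using nonneg \<alpha> by (simp add: ennreal_plus[symmetric] ennreal_leI del: ennreal_plus)
qed

theorem corollary4:
  fixes p :: nat and d \<gamma> a :: "nat \<Rightarrow> real" and \<alpha> :: real
  assumes p3: "p \<ge> 3"
    and dpos: "\<forall>j<p. d j > 0"
    and gnn: "\<forall>j<p. \<gamma> j \<ge> 0"
    and sorted: "\<forall>i j. i \<le> j \<and> j < p \<longrightarrow> dstar d \<gamma> j \<le> dstar d \<gamma> i"
    and a_feas: "feasibleA p d \<gamma> a"
    and a_max: "\<forall>b. feasibleA p d \<gamma> b \<longrightarrow> cstar p d b \<le> cstar p d a"
    and a_uniq: "\<forall>b. feasibleA p d \<gamma> b \<and> cstar p d b = cstar p d a \<longrightarrow> (\<forall>j<p. b j = a j)"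
    and alpha: "\<alpha> \<ge> Max ((\<lambda>j. d j / (d j + \<gamma> j)) ` {..<p})"
  defines "lam \<equiv> (\<lambda>j. \<alpha> * (d j + \<gamma> j) - d j)"
    and "S4 \<equiv> dstar d \<gamma> 0 + dstar d \<gamma> 1 + dstar d \<gamma> 2 + (if p \<ge> 4 then dstar d \<gamma> 3 else 0)"
  shows "max (bayes_risk p d (shrink_est p d a) lam) (max_risk p d (shrink_est p d a) lam)
           \<le> bayes_risk p d (bayes_rule d lam) lam + ennreal (S4 / \<alpha>)
       \<and> bayes_risk p d (bayes_rule d lam) lam + ennreal (S4 / \<alpha>)
           = minimax_linear_risk p d lam + ennreal (S4 / \<alpha>)
       \<and> bayes_risk p d (bayes_rule d lam) lam
           = ennreal ((\<Sum>j<p. d j) - (\<Sum>j<p. dstar d \<gamma> j) / \<alpha>)"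
proof -
  define T where "T = (\<Sum>j<p. dstar d \<gamma> j)"
  define c where "c = cstar p d a"
  have \<alpha>: "\<alpha> > 0" and lam: "\<forall>j<p. lam j \<ge> 0"
    using Gamma_alpha_nonneg[OF _ dpos gnn alpha] p3 by (simp_all add: lam_def)
  have T: "T > 0" using sum_dstar_pos[OF _ dpos gnn] p3 by (simp add: T_def)
  have V: "(\<Sum>j<p. d j * lam j / (d j + lam j)) = (\<Sum>j<p. d j) - T / \<alpha>"
    unfolding lam_def T_def by (rule sum_ratio_Gamma_alpha[OF \<alpha> dpos gnn])
  have c: "c > 0" unfolding c_def by (rule cstar_maximiser_pos[OF p3 dpos gnn a_max])
  obtain k1 k2 k3 where k: "k1 < p" "k2 < p" "k3 < p" "k1 \<noteq> k2" "k1 \<noteq> k3" "k2 \<noteq> k3"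
      and a_k: "a k1 \<noteq> 0" "a k2 \<noteq> 0" "a k3 \<noteq> 0"
    using cstar_pos_imp_three_nonzero[OF dpos _ c[unfolded c_def]] a_feas p3
    by (auto simp: feasibleA_def)
  have "(\<Sum>j<p. (a j)\<^sup>2 * (d j + lam j)) = \<alpha> * (\<Sum>j<p. (d j + \<gamma> j) * (a j)\<^sup>2)"
    by (simp add: lam_def sum_distrib_left mult_ac)
  then have m: "(\<Sum>j<p. (a j)\<^sup>2 * (d j + lam j)) = \<alpha> * T" "\<alpha> * T > 0"
    using a_feas \<alpha> T by (simp_all add: feasibleA_def T_def)
  have "max (bayes_risk p d (shrink_est p d a) lam) (max_risk p d (shrink_est p d a) lam)
      \<le> ennreal ((\<Sum>j<p. d j) - c\<^sup>2 / (\<alpha> * T))"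
    using bayes_risk_shrink_est_le[OF dpos k a_k _ lam m] max_risk_shrink_est_le[OF dpos k a_k _ m] c
    by (simp add: c_def)
  also have "\<dots> \<le> ennreal ((\<Sum>j<p. d j) - T / \<alpha>) + ennreal (S4 / \<alpha>)"
  proof (rule excess_risk_le[OF \<alpha> T])
    show "T * (T - S4) \<le> c\<^sup>2"
      using cstar_maximiser_sq_ge[OF p3 dpos gnn a_max sorted] by (simp add: c_def T_def S4_def)
    show "0 \<le> (\<Sum>j<p. d j) - T / \<alpha>"
      unfolding V[symmetric] using dpos lam by (intro sum_nonneg) (simp add: less_imp_le)
    have "0 \<le> dstar d \<gamma> j" if "j < p" for j using dpos gnn that by (auto intro: less_imp_le dstar_pos)
    then show "0 \<le> S4" using p3 by (simp add: S4_def)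
  qed
  finally show ?thesis
    using bayes_risk_bayes_rule[OF dpos lam] minimax_linear_risk_eq[OF dpos lam] V
    by (simp add: T_def)
qed

end
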